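(* Let $n\ge1$, $p$ a prime, and $r$ a composition of $n$. The basis element $\overline{B}_r$ of the $p$-modular descent algebra $\Sigma(n,p)$ is nilpotent if and only if some positive integer occurs at least $p$ times as a component of $r$.
   Context: A composition of $n$ is a sequence of positive integers with sum $n$. The descent algebra $\Sigma_n$ has basis $\{B_q\}$ indexed by compositions of $n$ with multiplication $B_qB_r=\sum_{Z\in S(q,r)}B_{c(Z)}$, where for $q=[a_1,\dots,a_s]$, $r=[b_1,\dots,b_t]$, $S(q,r)$ is the set of $s\times t$ non-negative integer matrices with row sums $a_i$ and column sums $b_j$, and $c(Z)$ is the composition obtained by reading the entries of $Z$ row by row and omitting zeros. Let $\mathcal{Z}_n$ be the subring of integral combinations of the $B_q$ and $\Sigma(n,p)=\mathcal{Z}_n/p\mathcal{Z}_n$, an $\mathbb{F}_p$-algebra with basis $\overline{B}_q$ (images of the $B_q$); equivalently, $\overline{B}_q\overline{B}_r$ is given by the same formula with coefficients reduced mod $p$. *)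

theory Defs
  imports Main "HOL-Computational_Algebra.Primes"
begin

definition compositions :: "nat \<Rightarrow> nat list set" where
  "compositions n = {c. (\<forall>x\<in>set c. 0 < x) \<and> sum_list c = n}"

definition Smat :: "nat list \<Rightarrow> nat list \<Rightarrow> (nat \<Rightarrow> nat \<Rightarrow> nat) set" where
  "Smat q r = {Z. (\<forall>i j. (length q \<le> i \<or> length r \<le> j) \<longrightarrow> Z i j = 0)
      \<and> (\<forall>i<length q. (\<Sum>j<length r. Z i j) = q ! i)
      \<and> (\<forall>j<length r. (\<Sum>i<length q. Z i j) = r ! j)}"

definition cZ :: "nat \<Rightarrow> nat \<Rightarrow> (nat \<Rightarrow> nat \<Rightarrow> nat) \<Rightarrow> nat list" where
  "cZ s t Z = filter (\<lambda>x. x \<noteq> 0) (concat (map (\<lambda>i. map (\<lambda>j. Z i j) [0..<t]) [0..<s]))"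

text \<open>Coefficient of B_c in B_q B_r (over the integers).\<close>
definition Bprod :: "nat list \<Rightarrow> nat list \<Rightarrow> nat list \<Rightarrow> int" where
  "Bprod q r c = int (card {Z \<in> Smat q r. cZ (length q) (length r) Z = c})"

text \<open>Elements of Sigma(n,p) are coefficient functions on compositions of n, with
  coefficients in {0..p-1} representing F_p. Product reduced mod p.\<close>
definition dmult :: "nat \<Rightarrow> nat \<Rightarrow> (nat list \<Rightarrow> int) \<Rightarrow> (nat list \<Rightarrow> int) \<Rightarrow> (nat list \<Rightarrow> int)" where
  "dmult n p x y = (\<lambda>c. (\<Sum>q\<in>compositions n. \<Sum>r\<in>compositions n.
       x q * y r * Bprod q r c) mod int p)"

definition basisB :: "nat \<Rightarrow> nat list \<Rightarrow> (nat list \<Rightarrow> int)" where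
  "basisB p r = (\<lambda>c. if c = r then 1 mod int p else 0)"

text \<open>dpow n p x k = x^(k+1) in Sigma(n,p).\<close>
fun dpow :: "nat \<Rightarrow> nat \<Rightarrow> (nat list \<Rightarrow> int) \<Rightarrow> nat \<Rightarrow> (nat list \<Rightarrow> int)" where
  "dpow n p x 0 = (\<lambda>c. x c mod int p)"
| "dpow n p x (Suc k) = dmult n p x (dpow n p x k)"

definition nilpotent_desc :: "nat \<Rightarrow> nat \<Rightarrow> (nat list \<Rightarrow> int) \<Rightarrow> bool" where
  "nilpotent_desc n p x \<longleftrightarrow> (\<exists>k. dpow n p x k = (\<lambda>_. 0))"

end

theory Submission
  imports Defs "HOL-Combinatorics.Cycles"
begin

text \<open>
  For \<open>Z \<in> S(q,r)\<close> the composition \<open>c(Z)\<close> has at least as many parts as \<open>q\<close> and as \<open>r\<close>,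
  and it has exactly as many parts as \<open>q\<close> only if every row of \<open>Z\<close> has a single nonzero entry,
  in which case \<open>c(Z) = q\<close>. If a part \<open>a\<close> occurs \<open>p\<close> times in \<open>r\<close>, cyclically permuting these \<open>p\<close> columns acts
  on such matrices with period \<open>p\<close> and without fixed points, so \<open>p\<close> divides the coefficient of
  \<open>B\<^sub>q\<close> in \<open>B\<^sub>q B\<^sub>r\<close>. Hence every factor \<open>B\<^sub>r\<close> multiplied on the right raises the least length
  in the support, and since lengths are bounded by \<open>n\<close> some power of \<open>B\<^sub>r\<close> vanishes. Multiplying on
  the right is legitimate because the descent algebra is associative: both bracketings of
  \<open>B\<^sub>q\<^sub>1 B\<^sub>q\<^sub>2 B\<^sub>q\<^sub>3\<close> count the same three-dimensional arrays.

  Conversely, multiplying on the left by \<open>B\<^sub>r\<close> never produces \<open>B\<^sub>c\<close> with \<open>c\<close> shorter than \<open>r\<close>, or of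
  the same length unless \<open>c = r\<close>, so the coefficient of \<open>B\<^sub>r\<close> in the \<open>(k+1)\<close>-st power of
  \<open>B\<^sub>r\<close> is the \<open>k\<close>-th power of its coefficient in \<open>B\<^sub>r B\<^sub>r\<close>. The latter counts the permutation
  matrices whose permutation fixes \<open>r\<close>, that is the product of the factorials of the
  multiplicities of the parts of \<open>r\<close>, which is prime to \<open>p\<close> when every multiplicity is below \<open>p\<close>.
\<close>

lemma compositions_positive: "c \<in> compositions n \<Longrightarrow> \<forall>x\<in>set c. 0 < x"
  by (simp add: compositions_def)

lemma length_le_sum_list_if_positive: "\<forall>x\<in>set c. 0 < x \<Longrightarrow> length c \<le> sum_list (c :: nat list)"
  by (induction c) auto

lemma length_le_if_compositions: "c \<in> compositions n \<Longrightarrow> length c \<le> n"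
  using length_le_sum_list_if_positive by (auto simp: compositions_def)

lemma finite_compositions: "finite (compositions n)"
proof (rule finite_subset)
  show "compositions n \<subseteq> {xs. set xs \<subseteq> {..n} \<and> length xs \<le> n}"
    using length_le_if_compositions elem_le_sum_list
    by (fastforce simp: compositions_def in_set_conv_nth)
  show "finite {xs. set xs \<subseteq> {..n} \<and> length xs \<le> n}"
    by (rule finite_lists_length_le) simp
qed

lemma
  assumes "Z \<in> Smat q r"
  shows Smat_zero: "length q \<le> i \<or> length r \<le> j \<Longrightarrow> Z i j = 0"
    and Smat_row_sum: "i < length q \<Longrightarrow> (\<Sum>j<length r. Z i j) = q ! i"
    and Smat_col_sum: "j < length r \<Longrightarrow> (\<Sum>i<length q. Z i j) = r ! j"
  using assms unfolding Smat_def by auto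

lemma Smat_row_nonzero:
  assumes "Z \<in> Smat q r" "i < length q" "0 < q ! i"
  obtains j where "j < length r" "Z i j \<noteq> 0"
  using Smat_row_sum[OF assms(1,2)] assms(3) by (metis lessThan_iff less_not_refl sum.neutral)

lemma Smat_col_nonzero:
  assumes "Z \<in> Smat q r" "j < length r" "0 < r ! j"
  obtains i where "i < length q" "Z i j \<noteq> 0"
  using Smat_col_sum[OF assms(1,2)] assms(3) by (metis lessThan_iff less_not_refl sum.neutral)

lemma Smat_entry_le:
  assumes Z: "Z \<in> Smat q r"
  shows "Z i j \<le> sum_list q"
proof (cases "i < length q \<and> j < length r")
  case True
  have "Z i j \<le> (\<Sum>j<length r. Z i j)" using True by (intro member_le_sum) auto
  also have "\<dots> \<le> sum_list q" using True Smat_row_sum[OF Z] by (simp add: elem_le_sum_list)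
  finally show ?thesis .
qed (use Smat_zero[OF Z] in auto)

lemma finite_Smat: "finite (Smat q r)"
proof -
  let ?I = "{..<length q} \<times> {..<length r}"
  let ?h = "\<lambda>Z::nat\<Rightarrow>nat\<Rightarrow>nat. restrict (case_prod Z) ?I"
  have "?h ` Smat q r \<subseteq> PiE ?I (\<lambda>_. {..sum_list q})"
    using Smat_entry_le by (auto simp: PiE_iff split: if_splits)
  hence "finite (?h ` Smat q r)" by (rule finite_subset) (simp add: finite_PiE)
  moreover have "inj_on ?h (Smat q r)"
  proof (rule inj_onI, intro ext)
    fix Z W i j assume Z: "Z \<in> Smat q r" and W: "W \<in> Smat q r" and eq: "?h Z = ?h W"
    show "Z i j = W i j"
    proof (cases "i < length q \<and> j < length r")
      case True then show ?thesis using fun_cong[OF eq, of "(i, j)"] by auto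
    qed (use Smat_zero[OF Z] Smat_zero[OF W] in auto)
  qed
  ultimately show ?thesis by (rule finite_imageD)
qed

definition nz_positions :: "nat \<Rightarrow> nat \<Rightarrow> (nat \<Rightarrow> nat \<Rightarrow> nat) \<Rightarrow> (nat \<times> nat) list" where
  "nz_positions s t Z = filter (\<lambda>(i,j). Z i j \<noteq> 0) (List.product [0..<s] [0..<t])"

lemma product_conv_concat: "List.product xs ys = concat (map (\<lambda>x. map (Pair x) ys) xs)"
  by (induction xs) auto

lemma cZ_conv_nz_positions: "cZ s t Z = map (case_prod Z) (nz_positions s t Z)"
proof -
  have "concat (map (\<lambda>i. map (Z i) [0..<t]) [0..<s]) = map (case_prod Z) (List.product [0..<s] [0..<t])"
    by (simp add: product_conv_concat map_concat comp_def)
  then show ?thesis unfolding cZ_def nz_positions_def by (simp add: filter_map comp_def split_def)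
qed

lemma cZ_conv_rows: "cZ s t Z = concat (map (\<lambda>i. filter ((<) 0) (map (Z i) [0..<t])) [0..<s])"
proof -
  have "(\<lambda>x::nat. x \<noteq> 0) = (<) 0" by auto
  then show ?thesis unfolding cZ_def by (simp add: filter_concat comp_def)
qed

lemma distinct_nz_positions: "distinct (nz_positions s t Z)"
  unfolding nz_positions_def by (simp add: distinct_product)

lemma set_nz_positions: "set (nz_positions s t Z) = {(i,j). i < s \<and> j < t \<and> Z i j \<noteq> 0}"
  unfolding nz_positions_def by auto

lemma length_cZ: "length (cZ s t Z) = length (nz_positions s t Z)"
  by (simp add: cZ_conv_nz_positions)

lemma length_cZ_conv_card: "length (cZ s t Z) = card {(i,j). i < s \<and> j < t \<and> Z i j \<noteq> 0}"
  using distinct_card[OF distinct_nz_positions] by (simp add: length_cZ set_nz_positions)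

lemma length_filter_positive_upt: "length (filter ((<) 0) (map f [0..<t])) = card {j. j < t \<and> f j \<noteq> (0::nat)}"
proof -
  have "length (filter ((<) 0) (map f [0..<t])) = length (filter (\<lambda>j. f j \<noteq> 0) [0..<t])"
    by (simp add: filter_map comp_def)
  also have "\<dots> = card {j. j < t \<and> f j \<noteq> 0}"
    by (subst distinct_card[symmetric]) (auto intro: arg_cong[where f = card])
  finally show ?thesis .
qed

lemma length_cZ_conv_rows: "length (cZ s t Z) = (\<Sum>i<s. card {j. j < t \<and> Z i j \<noteq> 0})"
  by (simp only: cZ_conv_rows length_concat map_map comp_def length_filter_positive_upt
      interv_sum_list_conv_sum_set_nat atLeast0LessThan set_upt)

lemma sum_list_filter_positive: "sum_list (filter ((<) 0) xs) = sum_list (xs :: nat list)"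
  by (induction xs) auto

lemma sum_list_concat: "sum_list (concat xss) = sum_list (map sum_list (xss :: 'a::monoid_add list list))"
  by (induction xss) auto

lemma sum_list_cZ:
  assumes "Z \<in> Smat q r"
  shows "sum_list (cZ (length q) (length r) Z) = sum_list q"
proof -
  have "sum_list (cZ (length q) (length r) Z) = (\<Sum>i<length q. \<Sum>j<length r. Z i j)"
    by (simp add: cZ_def sum_list_filter_positive sum_list_concat comp_def
        interv_sum_list_conv_sum_set_nat atLeast0LessThan)
  also have "\<dots> = sum_list q"
    using Smat_row_sum[OF assms] by (simp add: sum_list_sum_nth atLeast0LessThan)
  finally show ?thesis .
qed

lemma cZ_in_compositions:
  assumes "Z \<in> Smat q r" "q \<in> compositions n"
  shows "cZ (length q) (length r) Z \<in> compositions n"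
  using sum_list_cZ[OF assms(1)] assms(2) unfolding compositions_def cZ_def by auto

lemma card_nonzero_row_pos:
  assumes "Z \<in> Smat q r" "i < length q" "0 < q ! i"
  shows "0 < card {j. j < length r \<and> Z i j \<noteq> 0}"
proof -
  obtain j where "j < length r" "Z i j \<noteq> 0" using Smat_row_nonzero[OF assms] .
  then show ?thesis by (subst card_gt_0_iff) auto
qed

lemma length_cZ_ge_rows:
  assumes "Z \<in> Smat q r" "\<forall>x\<in>set q. 0 < x"
  shows "length q \<le> length (cZ (length q) (length r) Z)"
proof -
  have "(\<Sum>i<length q. 1) \<le> (\<Sum>i<length q. card {j. j < length r \<and> Z i j \<noteq> 0})"
    using card_nonzero_row_pos[OF assms(1)] assms(2) by (intro sum_mono) (simp add: Suc_le_eq)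
  then show ?thesis by (simp add: length_cZ_conv_rows)
qed

lemma length_cZ_ge_cols:
  assumes "Z \<in> Smat q r" "\<forall>x\<in>set r. 0 < x"
  shows "length r \<le> length (cZ (length q) (length r) Z)"
proof -
  have "\<forall>j<length r. \<exists>i<length q. Z i j \<noteq> 0"
    using Smat_col_nonzero[OF assms(1)] assms(2) by (metis nth_mem)
  then obtain f where f: "\<And>j. j < length r \<Longrightarrow> f j < length q \<and> Z (f j) j \<noteq> 0" by metis
  have "card {..<length r} \<le> card {(i,j). i < length q \<and> j < length r \<and> Z i j \<noteq> 0}"
  proof (rule card_inj_on_le[where f = "\<lambda>j. (f j, j)"])
    show "finite {(i,j). i < length q \<and> j < length r \<and> Z i j \<noteq> 0}"
      by (rule finite_subset[of _ "{..<length q} \<times> {..<length r}"]) auto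
  qed (use f in \<open>auto simp: inj_on_def\<close>)
  then show ?thesis by (simp add: length_cZ_conv_card)
qed

lemma single_entry_rows_if_length_cZ:
  assumes "Z \<in> Smat q r" "\<forall>x\<in>set q. 0 < x" "length (cZ (length q) (length r) Z) = length q"
  shows "\<forall>i<length q. card {j. j < length r \<and> Z i j \<noteq> 0} = 1"
proof (rule ccontr)
  let ?N = "\<lambda>i. card {j. j < length r \<and> Z i j \<noteq> 0}"
  have pos: "\<forall>i\<in>{..<length q}. 1 \<le> ?N i"
    using card_nonzero_row_pos[OF assms(1)] assms(2) by (simp add: Suc_le_eq)
  assume "\<not> ?thesis"
  then have "\<exists>i\<in>{..<length q}. 1 < ?N i" using pos by force
  then have "(\<Sum>i<length q. 1) < (\<Sum>i<length q. ?N i)"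
    using pos by (intro sum_strict_mono_ex1) auto
  then show False using assms(3) by (simp add: length_cZ_conv_rows)
qed

lemma cZ_eq_if_single_entry_rows:
  assumes "Z \<in> Smat q r" "\<forall>i<length q. card {j. j < length r \<and> Z i j \<noteq> 0} = 1"
  shows "cZ (length q) (length r) Z = q"
proof -
  have row: "filter ((<) 0) (map (Z i) [0..<length r]) = [q ! i]" if i: "i < length q" for i
  proof -
    let ?R = "filter ((<) 0) (map (Z i) [0..<length r])"
    have "length ?R = 1" using assms(2) i length_filter_positive_upt[of "Z i" "length r"] by simp
    moreover have "sum_list ?R = q ! i"
      using Smat_row_sum[OF assms(1) i]
      by (simp add: sum_list_filter_positive interv_sum_list_conv_sum_set_nat atLeast0LessThan)
    ultimately show ?thesis by (cases ?R) auto
  qed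
  have "map (\<lambda>i. filter ((<) 0) (map (Z i) [0..<length r])) [0..<length q]
      = map (\<lambda>i. [q ! i]) [0..<length q]"
    using row by (intro map_cong) auto
  then show ?thesis by (simp only: cZ_conv_rows concat_map_singleton map_nth)
qed

lemma cZ_eq_iff_single_entry_rows:
  assumes "Z \<in> Smat q r" "\<forall>x\<in>set q. 0 < x"
  shows "cZ (length q) (length r) Z = q \<longleftrightarrow> (\<forall>i<length q. card {j. j < length r \<and> Z i j \<noteq> 0} = 1)"
  using single_entry_rows_if_length_cZ[OF assms] cZ_eq_if_single_entry_rows[OF assms(1)] by auto

lemma Bprod_eq_0I:
  assumes "\<And>Z. Z \<in> Smat q r \<Longrightarrow> cZ (length q) (length r) Z \<noteq> c"
  shows "Bprod q r c = 0"
proof -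
  have "{Z \<in> Smat q r. cZ (length q) (length r) Z = c} = {}" using assms by blast
  then show ?thesis unfolding Bprod_def by (simp only: card.empty of_nat_0)
qed

lemma Bprod_eq_0_if_not_composition:
  assumes "q \<in> compositions n" "c \<notin> compositions n"
  shows "Bprod q r c = 0"
  by (rule Bprod_eq_0I) (use cZ_in_compositions[OF _ assms(1)] assms(2) in blast)

lemma Bprod_eq_0_if_shorter_than_left:
  assumes "q \<in> compositions n" "length c < length q"
  shows "Bprod q r c = 0"
  by (rule Bprod_eq_0I) (use length_cZ_ge_rows[OF _ compositions_positive[OF assms(1)]] assms(2) in fastforce)

lemma Bprod_eq_0_if_shorter_than_right:
  assumes "r \<in> compositions n" "length c < length r"
  shows "Bprod q r c = 0"
  by (rule Bprod_eq_0I) (use length_cZ_ge_cols[OF _ compositions_positive[OF assms(1)]] assms(2) in fastforce)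

lemma Bprod_eq_0_if_length_eq_left:
  assumes "q \<in> compositions n" "length c = length q" "c \<noteq> q"
  shows "Bprod q r c = 0"
proof (rule Bprod_eq_0I)
  fix Z assume "Z \<in> Smat q r"
  then show "cZ (length q) (length r) Z \<noteq> c"
    using single_entry_rows_if_length_cZ[OF _ compositions_positive[OF assms(1)]]
      cZ_eq_if_single_entry_rows assms(2,3) by fastforce
qed

section \<open>Associativity of the descent algebra\<close>

definition list_index :: "'a list \<Rightarrow> 'a \<Rightarrow> nat" where
  "list_index xs = the_inv_into {..<length xs} ((!) xs)"

lemma list_index_nth: "distinct xs \<Longrightarrow> l < length xs \<Longrightarrow> list_index xs (xs ! l) = l"
  unfolding list_index_def by (rule the_inv_into_f_f) (auto intro: inj_on_nth)

lemma
  assumes "distinct xs" "x \<in> set xs"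
  shows list_index_less: "list_index xs x < length xs"
    and nth_list_index: "xs ! list_index xs x = x"
  using assms list_index_nth by (metis in_set_conv_nth)+

text \<open>
  A pair \<open>(Z, W)\<close> with \<open>W \<in> S(c(Z), q\<^sub>3)\<close> is the same datum as a three-dimensional array \<open>X\<close>
  with \<open>\<Sum>\<^sub>k X i j k = Z i j\<close>: row \<open>l\<close> of \<open>W\<close> is the fibre \<open>X i j _\<close> over the \<open>l\<close>-th nonzero
  entry \<open>(i, j)\<close> of \<open>Z\<close>. The maps \<open>spread\<close> and \<open>gather\<close> move data between these two indexings.
\<close>

definition spread :: "nat \<Rightarrow> nat \<Rightarrow> (nat \<Rightarrow> nat \<Rightarrow> nat) \<Rightarrow> (nat \<Rightarrow> nat) \<Rightarrow> nat \<Rightarrow> nat \<Rightarrow> nat" where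
  "spread s t Z w i j =
    (if (i, j) \<in> set (nz_positions s t Z) then w (list_index (nz_positions s t Z) (i, j)) else 0)"

definition gather :: "nat \<Rightarrow> nat \<Rightarrow> (nat \<Rightarrow> nat \<Rightarrow> nat) \<Rightarrow> (nat \<Rightarrow> nat \<Rightarrow> nat) \<Rightarrow> nat \<Rightarrow> nat" where
  "gather s t Z F l =
    (if l < length (nz_positions s t Z) then case_prod F (nz_positions s t Z ! l) else 0)"

lemma spread_at_nz_position:
  "l < length (nz_positions s t Z) \<Longrightarrow> case_prod (spread s t Z w) (nz_positions s t Z ! l) = w l"
  using list_index_nth[OF distinct_nz_positions] by (auto simp: spread_def split_beta)

lemma spread_eq_0: "\<not> (i < s \<and> j < t \<and> Z i j \<noteq> 0) \<Longrightarrow> spread s t Z w i j = 0"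
  unfolding spread_def set_nz_positions by auto

lemma gather_spread:
  "(\<And>l. length (nz_positions s t Z) \<le> l \<Longrightarrow> w l = 0) \<Longrightarrow> gather s t Z (spread s t Z w) = w"
  by (auto simp: gather_def spread_at_nz_position)

lemma spread_gather:
  assumes "\<And>i j. \<not> (i < s \<and> j < t \<and> Z i j \<noteq> 0) \<Longrightarrow> F i j = 0"
  shows "spread s t Z (gather s t Z F) = F"
proof (intro ext)
  fix i j
  let ?P = "nz_positions s t Z"
  show "spread s t Z (gather s t Z F) i j = F i j"
  proof (cases "(i, j) \<in> set ?P")
    case True
    then show ?thesis
      using list_index_less[OF distinct_nz_positions True] nth_list_index[OF distinct_nz_positions True]
      by (simp add: spread_def gather_def)
  next
    case False
    then have "F i j = 0" using assms by (auto simp: set_nz_positions)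
    with False show ?thesis by (simp add: spread_def)
  qed
qed

lemma sum_nz_positions:
  assumes "\<And>i j. i < s \<Longrightarrow> j < t \<Longrightarrow> Z i j = 0 \<Longrightarrow> F i j = 0"
  shows "(\<Sum>i<s. \<Sum>j<t. F i j) = (\<Sum>l<length (nz_positions s t Z). case_prod F (nz_positions s t Z ! l))"
proof -
  let ?P = "nz_positions s t Z"
  have "(\<Sum>i<s. \<Sum>j<t. F i j) = (\<Sum>x\<in>{..<s} \<times> {..<t}. case_prod F x)"
    by (simp add: sum.cartesian_product)
  also have "\<dots> = (\<Sum>x\<in>set ?P. case_prod F x)"
    by (rule sum.mono_neutral_right) (use assms in \<open>auto simp: set_nz_positions\<close>)
  also have "\<dots> = sum_list (map (case_prod F) ?P)"
    by (rule sum.distinct_set_conv_list[OF distinct_nz_positions])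
  also have "\<dots> = (\<Sum>l<length ?P. case_prod F (?P ! l))"
    by (simp add: sum_list_sum_nth atLeast0LessThan)
  finally show ?thesis .
qed

lemma sum_spread:
  "(\<Sum>i<s. \<Sum>j<t. spread s t Z w i j) = (\<Sum>l<length (nz_positions s t Z). w l)"
  by (subst sum_nz_positions[where Z = Z]) (auto simp: spread_eq_0 spread_at_nz_position)

lemma sum_gather:
  assumes "\<And>i j. i < s \<Longrightarrow> j < t \<Longrightarrow> Z i j = 0 \<Longrightarrow> F i j = 0"
  shows "(\<Sum>l<length (nz_positions s t Z). gather s t Z F l) = (\<Sum>i<s. \<Sum>j<t. F i j)"
  by (simp add: sum_nz_positions[OF assms] gather_def)

lemma map_nth_upt: "map (\<lambda>l. f (xs ! l)) [0..<length xs] = map f xs"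
  by (rule nth_equalityI) auto

lemma concat_map_nz_positions:
  assumes "\<And>i j. i < s \<Longrightarrow> j < t \<Longrightarrow> Z i j = 0 \<Longrightarrow> f i j = []"
  shows "concat (map (\<lambda>l. case_prod f (nz_positions s t Z ! l)) [0..<length (nz_positions s t Z)])
    = concat (map (case_prod f) (List.product [0..<s] [0..<t]))"
proof -
  have "concat (map (case_prod f) (filter P xs)) = concat (map (case_prod f) xs)"
    if "\<forall>x\<in>set xs. \<not> P x \<longrightarrow> case_prod f x = []" for P xs
    using that by (induction xs) auto
  then show ?thesis unfolding map_nth_upt nz_positions_def using assms by auto
qed

lemma filter_map_nz_positions:
  assumes "\<And>i j. i < s \<Longrightarrow> j < t \<Longrightarrow> Z i j = 0 \<Longrightarrow> f i j = 0"
  shows "filter ((<) 0) (map (\<lambda>l. case_prod f (nz_positions s t Z ! l)) [0..<length (nz_positions s t Z)])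
    = filter ((<) (0::nat)) (map (case_prod f) (List.product [0..<s] [0..<t]))"
proof -
  have "filter ((<) 0) (map (case_prod f) (filter P xs)) = filter ((<) 0) (map (case_prod f) xs)"
    if "\<forall>x\<in>set xs. \<not> P x \<longrightarrow> case_prod f x = 0" for P xs
    using that by (induction xs) auto
  then show ?thesis unfolding map_nth_upt nz_positions_def using assms by auto
qed

definition Smat3 :: "nat list \<Rightarrow> nat list \<Rightarrow> nat list \<Rightarrow> (nat \<Rightarrow> nat \<Rightarrow> nat \<Rightarrow> nat) set" where
  "Smat3 q1 q2 q3 = {X. (\<forall>i j k. length q1 \<le> i \<or> length q2 \<le> j \<or> length q3 \<le> k \<longrightarrow> X i j k = 0)
     \<and> (\<forall>i<length q1. (\<Sum>j<length q2. \<Sum>k<length q3. X i j k) = q1 ! i)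
     \<and> (\<forall>j<length q2. (\<Sum>i<length q1. \<Sum>k<length q3. X i j k) = q2 ! j)
     \<and> (\<forall>k<length q3. (\<Sum>i<length q1. \<Sum>j<length q2. X i j k) = q3 ! k)}"

lemma
  assumes "X \<in> Smat3 q1 q2 q3"
  shows Smat3_zero: "length q1 \<le> i \<or> length q2 \<le> j \<or> length q3 \<le> k \<Longrightarrow> X i j k = 0"
    and Smat3_sum1: "i < length q1 \<Longrightarrow> (\<Sum>j<length q2. \<Sum>k<length q3. X i j k) = q1 ! i"
    and Smat3_sum2: "j < length q2 \<Longrightarrow> (\<Sum>i<length q1. \<Sum>k<length q3. X i j k) = q2 ! j"
    and Smat3_sum3: "k < length q3 \<Longrightarrow> (\<Sum>i<length q1. \<Sum>j<length q2. X i j k) = q3 ! k"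
  using assms unfolding Smat3_def by auto

definition cZ3 :: "nat \<Rightarrow> nat \<Rightarrow> nat \<Rightarrow> (nat \<Rightarrow> nat \<Rightarrow> nat \<Rightarrow> nat) \<Rightarrow> nat list" where
  "cZ3 s t u X = concat (map (\<lambda>(i, j). filter ((<) 0) (map (X i j) [0..<u])) (List.product [0..<s] [0..<t]))"

lemma cZ3_conv_slices:
  "cZ3 s t u X = concat (map (\<lambda>i. filter ((<) 0) (map (\<lambda>(j, k). X i j k) (List.product [0..<t] [0..<u]))) [0..<s])"
  unfolding cZ3_def product_conv_concat by (induction s) (simp_all add: map_concat comp_def filter_concat)

definition sum_last :: "nat list \<Rightarrow> (nat \<Rightarrow> nat \<Rightarrow> nat \<Rightarrow> nat) \<Rightarrow> nat \<Rightarrow> nat \<Rightarrow> nat" where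
  "sum_last q3 X i j = (\<Sum>k<length q3. X i j k)"

definition join_left :: "nat list \<Rightarrow> nat list \<Rightarrow> (nat \<Rightarrow> nat \<Rightarrow> nat) \<times> (nat \<Rightarrow> nat \<Rightarrow> nat) \<Rightarrow> nat \<Rightarrow> nat \<Rightarrow> nat \<Rightarrow> nat" where
  "join_left q1 q2 = (\<lambda>(Z, W) i j k. spread (length q1) (length q2) Z (\<lambda>l. W l k) i j)"

definition split_left :: "nat list \<Rightarrow> nat list \<Rightarrow> nat list \<Rightarrow> (nat \<Rightarrow> nat \<Rightarrow> nat \<Rightarrow> nat) \<Rightarrow> (nat \<Rightarrow> nat \<Rightarrow> nat) \<times> (nat \<Rightarrow> nat \<Rightarrow> nat)" where
  "split_left q1 q2 q3 X =
    (sum_last q3 X, \<lambda>l k. gather (length q1) (length q2) (sum_last q3 X) (\<lambda>i j. X i j k) l)"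

definition left_pairs :: "nat list \<Rightarrow> nat list \<Rightarrow> nat list \<Rightarrow> nat list \<Rightarrow> ((nat \<Rightarrow> nat \<Rightarrow> nat) \<times> (nat \<Rightarrow> nat \<Rightarrow> nat)) set" where
  "left_pairs q1 q2 q3 c = {(Z, W). Z \<in> Smat q1 q2 \<and> W \<in> Smat (cZ (length q1) (length q2) Z) q3
      \<and> cZ (length (cZ (length q1) (length q2) Z)) (length q3) W = c}"

lemma nth_cZ: "l < length (nz_positions s t Z) \<Longrightarrow> cZ s t Z ! l = case_prod Z (nz_positions s t Z ! l)"
  by (simp add: cZ_conv_nz_positions)

lemma sum_last_join_left:
  assumes Z: "Z \<in> Smat q1 q2" and W: "W \<in> Smat (cZ (length q1) (length q2) Z) q3"
  shows "sum_last q3 (join_left q1 q2 (Z, W)) = Z"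
proof (intro ext)
  fix i j
  let ?P = "nz_positions (length q1) (length q2) Z"
  show "sum_last q3 (join_left q1 q2 (Z, W)) i j = Z i j"
  proof (cases "(i, j) \<in> set ?P")
    case True
    let ?l = "list_index ?P (i, j)"
    have l: "?l < length ?P" "?P ! ?l = (i, j)"
      using list_index_less[OF distinct_nz_positions True] nth_list_index[OF distinct_nz_positions True] .
    have "sum_last q3 (join_left q1 q2 (Z, W)) i j = (\<Sum>k<length q3. W ?l k)"
      using True by (simp add: sum_last_def join_left_def spread_def)
    also have "\<dots> = cZ (length q1) (length q2) Z ! ?l"
      using Smat_row_sum[OF W] l(1) by (simp add: length_cZ)
    also have "\<dots> = Z i j" using nth_cZ[OF l(1)] l(2) by simp
    finally show ?thesis .
  next
    case False
    then show ?thesis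
      using Smat_zero[OF Z] by (auto simp: sum_last_def join_left_def spread_def set_nz_positions)
  qed
qed

lemma cZ3_join_left:
  "cZ3 (length q1) (length q2) (length q3) (join_left q1 q2 (Z, W))
    = cZ (length (cZ (length q1) (length q2) Z)) (length q3) W"
proof -
  let ?P = "nz_positions (length q1) (length q2) Z"
  let ?f = "\<lambda>i j. filter ((<) 0) (map (join_left q1 q2 (Z, W) i j) [0..<length q3])"
  have "map (\<lambda>l. filter ((<) 0) (map (W l) [0..<length q3])) [0..<length ?P]
      = map (\<lambda>l. case_prod ?f (?P ! l)) [0..<length ?P]"
  proof (rule map_cong[OF refl])
    fix l assume "l \<in> set [0..<length ?P]"
    then have "\<And>k. case_prod (spread (length q1) (length q2) Z (\<lambda>l. W l k)) (?P ! l) = W l k"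
      using spread_at_nz_position by simp
    then show "filter ((<) 0) (map (W l) [0..<length q3]) = case_prod ?f (?P ! l)"
      by (simp add: join_left_def split_beta)
  qed
  then have "cZ (length ?P) (length q3) W = concat (map (\<lambda>l. case_prod ?f (?P ! l)) [0..<length ?P])"
    by (simp only: cZ_conv_rows)
  also have "\<dots> = cZ3 (length q1) (length q2) (length q3) (join_left q1 q2 (Z, W))"
    unfolding cZ3_def by (subst concat_map_nz_positions) (auto simp: join_left_def spread_eq_0 split_beta)
  finally show ?thesis by (simp add: length_cZ)
qed

lemma join_left_in_Smat3:
  assumes Z: "Z \<in> Smat q1 q2" and W: "W \<in> Smat (cZ (length q1) (length q2) Z) q3"
  shows "join_left q1 q2 (Z, W) \<in> Smat3 q1 q2 q3"
proof -
  let ?X = "join_left q1 q2 (Z, W)"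
  have marg: "(\<Sum>k<length q3. ?X i j k) = Z i j" for i j
    using sum_last_join_left[OF Z W] by (simp add: sum_last_def fun_eq_iff)
  have "?X i j k = 0" if "length q1 \<le> i \<or> length q2 \<le> j \<or> length q3 \<le> k" for i j k
    using that Smat_zero[OF W] by (auto simp: join_left_def spread_def set_nz_positions)
  moreover have "(\<Sum>j<length q2. \<Sum>k<length q3. ?X i j k) = q1 ! i" if "i < length q1" for i
    using Smat_row_sum[OF Z that] by (simp add: marg)
  moreover have "(\<Sum>i<length q1. \<Sum>k<length q3. ?X i j k) = q2 ! j" if "j < length q2" for j
    using Smat_col_sum[OF Z that] by (simp add: marg)
  moreover have "(\<Sum>i<length q1. \<Sum>j<length q2. ?X i j k) = q3 ! k" if "k < length q3" for k
    using sum_spread Smat_col_sum[OF W that] by (simp add: join_left_def length_cZ)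
  ultimately show ?thesis unfolding Smat3_def by blast
qed

lemma Smat3_zero_if_sum_last:
  assumes "X \<in> Smat3 q1 q2 q3" "sum_last q3 X i j = 0"
  shows "X i j k = 0"
  using assms Smat3_zero[OF assms(1), of i j k] by (cases "k < length q3") (auto simp: sum_last_def)

lemma sum_last_in_Smat:
  assumes X: "X \<in> Smat3 q1 q2 q3"
  shows "sum_last q3 X \<in> Smat q1 q2"
  using Smat3_zero[OF X] Smat3_sum1[OF X] Smat3_sum2[OF X]
  unfolding Smat_def sum_last_def by (auto simp: sum.swap[of _ "{..<length q1}"])

lemma join_split_left:
  assumes X: "X \<in> Smat3 q1 q2 q3"
  shows "join_left q1 q2 (split_left q1 q2 q3 X) = X"
proof (intro ext)
  fix i j k
  have "spread (length q1) (length q2) (sum_last q3 X)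
      (gather (length q1) (length q2) (sum_last q3 X) (\<lambda>i j. X i j k)) = (\<lambda>i j. X i j k)"
    by (rule spread_gather) (use Smat3_zero[OF X] Smat3_zero_if_sum_last[OF X] in auto)
  then show "join_left q1 q2 (split_left q1 q2 q3 X) i j k = X i j k"
    by (simp add: join_left_def split_left_def fun_eq_iff)
qed

lemma split_left_in_left_pairs:
  assumes X: "X \<in> Smat3 q1 q2 q3" and c: "cZ3 (length q1) (length q2) (length q3) X = c"
  shows "split_left q1 q2 q3 X \<in> left_pairs q1 q2 q3 c"
proof -
  let ?Z = "sum_last q3 X"
  let ?P = "nz_positions (length q1) (length q2) ?Z"
  let ?W = "\<lambda>l k. gather (length q1) (length q2) ?Z (\<lambda>i j. X i j k) l"
  have vanish: "\<And>i j k. ?Z i j = 0 \<Longrightarrow> X i j k = 0" by (rule Smat3_zero_if_sum_last[OF X])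
  have "?W l k = 0" if "length (cZ (length q1) (length q2) ?Z) \<le> l \<or> length q3 \<le> k" for l k
    using that Smat3_zero[OF X] by (auto simp: gather_def length_cZ split_beta)
  moreover have "(\<Sum>k<length q3. ?W l k) = cZ (length q1) (length q2) ?Z ! l"
    if "l < length (cZ (length q1) (length q2) ?Z)" for l
    using that nth_cZ[of l] by (simp add: gather_def length_cZ sum_last_def split_beta)
  moreover have "(\<Sum>l<length (cZ (length q1) (length q2) ?Z). ?W l k) = q3 ! k" if "k < length q3" for k
    using sum_gather[of "length q1" "length q2" ?Z "\<lambda>i j. X i j k"] vanish Smat3_sum3[OF X that]
    by (simp add: length_cZ)
  ultimately have W: "?W \<in> Smat (cZ (length q1) (length q2) ?Z) q3" unfolding Smat_def by blast
  have "join_left q1 q2 (?Z, ?W) = X"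
    using join_split_left[OF X] by (simp add: split_left_def)
  then have "cZ (length (cZ (length q1) (length q2) ?Z)) (length q3) ?W = c"
    using cZ3_join_left[of q1 q2 q3 ?Z ?W] c by simp
  then show ?thesis using sum_last_in_Smat[OF X] W by (simp add: split_left_def left_pairs_def)
qed

lemma bij_betw_join_left:
  "bij_betw (join_left q1 q2) (left_pairs q1 q2 q3 c)
    {X \<in> Smat3 q1 q2 q3. cZ3 (length q1) (length q2) (length q3) X = c}"
proof (rule bij_betwI[where g = "split_left q1 q2 q3"])
  show "join_left q1 q2 \<in> left_pairs q1 q2 q3 c \<rightarrow> {X \<in> Smat3 q1 q2 q3. cZ3 (length q1) (length q2) (length q3) X = c}"
    using join_left_in_Smat3 cZ3_join_left by (fastforce simp: left_pairs_def)
  show "split_left q1 q2 q3 \<in> {X \<in> Smat3 q1 q2 q3. cZ3 (length q1) (length q2) (length q3) X = c} \<rightarrow> left_pairs q1 q2 q3 c"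
    using split_left_in_left_pairs by blast
  show "split_left q1 q2 q3 (join_left q1 q2 ZW) = ZW" if "ZW \<in> left_pairs q1 q2 q3 c" for ZW
  proof -
    obtain Z W where ZW: "ZW = (Z, W)" by (cases ZW)
    with that have Z: "Z \<in> Smat q1 q2" and W: "W \<in> Smat (cZ (length q1) (length q2) Z) q3"
      by (auto simp: left_pairs_def)
    have "gather (length q1) (length q2) Z (\<lambda>i j. join_left q1 q2 (Z, W) i j k) = (\<lambda>l. W l k)" for k
      using Smat_zero[OF W] by (simp add: join_left_def gather_spread length_cZ)
    then show ?thesis using ZW by (simp add: split_left_def sum_last_join_left[OF Z W])
  qed
  show "join_left q1 q2 (split_left q1 q2 q3 X) = X"
    if "X \<in> {X \<in> Smat3 q1 q2 q3. cZ3 (length q1) (length q2) (length q3) X = c}" for X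
    using that join_split_left by blast
qed

definition sum_first :: "nat list \<Rightarrow> (nat \<Rightarrow> nat \<Rightarrow> nat \<Rightarrow> nat) \<Rightarrow> nat \<Rightarrow> nat \<Rightarrow> nat" where
  "sum_first q1 X j k = (\<Sum>i<length q1. X i j k)"

definition join_right :: "nat list \<Rightarrow> nat list \<Rightarrow> (nat \<Rightarrow> nat \<Rightarrow> nat) \<times> (nat \<Rightarrow> nat \<Rightarrow> nat) \<Rightarrow> nat \<Rightarrow> nat \<Rightarrow> nat \<Rightarrow> nat" where
  "join_right q2 q3 = (\<lambda>(Y, V) i j k. spread (length q2) (length q3) Y (\<lambda>l. V i l) j k)"

definition split_right :: "nat list \<Rightarrow> nat list \<Rightarrow> nat list \<Rightarrow> (nat \<Rightarrow> nat \<Rightarrow> nat \<Rightarrow> nat) \<Rightarrow> (nat \<Rightarrow> nat \<Rightarrow> nat) \<times> (nat \<Rightarrow> nat \<Rightarrow> nat)" where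
  "split_right q1 q2 q3 X =
    (sum_first q1 X, \<lambda>i l. gather (length q2) (length q3) (sum_first q1 X) (\<lambda>j k. X i j k) l)"

definition right_pairs :: "nat list \<Rightarrow> nat list \<Rightarrow> nat list \<Rightarrow> nat list \<Rightarrow> ((nat \<Rightarrow> nat \<Rightarrow> nat) \<times> (nat \<Rightarrow> nat \<Rightarrow> nat)) set" where
  "right_pairs q1 q2 q3 c = {(Y, V). Y \<in> Smat q2 q3 \<and> V \<in> Smat q1 (cZ (length q2) (length q3) Y)
      \<and> cZ (length q1) (length (cZ (length q2) (length q3) Y)) V = c}"

lemma sum_first_join_right:
  assumes Y: "Y \<in> Smat q2 q3" and V: "V \<in> Smat q1 (cZ (length q2) (length q3) Y)"
  shows "sum_first q1 (join_right q2 q3 (Y, V)) = Y"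
proof (intro ext)
  fix j k
  let ?P = "nz_positions (length q2) (length q3) Y"
  show "sum_first q1 (join_right q2 q3 (Y, V)) j k = Y j k"
  proof (cases "(j, k) \<in> set ?P")
    case True
    let ?l = "list_index ?P (j, k)"
    have l: "?l < length ?P" "?P ! ?l = (j, k)"
      using list_index_less[OF distinct_nz_positions True] nth_list_index[OF distinct_nz_positions True] .
    have "sum_first q1 (join_right q2 q3 (Y, V)) j k = (\<Sum>i<length q1. V i ?l)"
      using True by (simp add: sum_first_def join_right_def spread_def)
    also have "\<dots> = cZ (length q2) (length q3) Y ! ?l"
      using Smat_col_sum[OF V] l(1) by (simp add: length_cZ)
    also have "\<dots> = Y j k" using nth_cZ[OF l(1)] l(2) by simp
    finally show ?thesis .
  next
    case False
    then show ?thesis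
      using Smat_zero[OF Y] by (auto simp: sum_first_def join_right_def spread_def set_nz_positions)
  qed
qed

lemma cZ3_join_right:
  "cZ3 (length q1) (length q2) (length q3) (join_right q2 q3 (Y, V))
    = cZ (length q1) (length (cZ (length q2) (length q3) Y)) V"
proof -
  let ?P = "nz_positions (length q2) (length q3) Y"
  let ?X = "join_right q2 q3 (Y, V)"
  have "filter ((<) 0) (map (V i) [0..<length ?P])
      = filter ((<) 0) (map (\<lambda>(j, k). ?X i j k) (List.product [0..<length q2] [0..<length q3]))" for i
  proof -
    have "map (V i) [0..<length ?P] = map (\<lambda>l. case_prod (?X i) (?P ! l)) [0..<length ?P]"
      using spread_at_nz_position[of _ "length q2" "length q3" Y "\<lambda>l. V i l"]
      by (auto simp: join_right_def split_beta)
    then have "filter ((<) 0) (map (V i) [0..<length ?P])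
        = filter ((<) 0) (map (\<lambda>l. case_prod (?X i) (?P ! l)) [0..<length ?P])"
      by (rule arg_cong)
    also have "\<dots> = filter ((<) 0) (map (case_prod (?X i)) (List.product [0..<length q2] [0..<length q3]))"
      by (rule filter_map_nz_positions) (simp add: join_right_def spread_eq_0)
    finally show ?thesis .
  qed
  then show ?thesis unfolding cZ3_conv_slices cZ_conv_rows[of "length q1"] length_cZ by simp
qed

lemma join_right_in_Smat3:
  assumes Y: "Y \<in> Smat q2 q3" and V: "V \<in> Smat q1 (cZ (length q2) (length q3) Y)"
  shows "join_right q2 q3 (Y, V) \<in> Smat3 q1 q2 q3"
proof -
  let ?X = "join_right q2 q3 (Y, V)"
  have marg: "(\<Sum>i<length q1. ?X i j k) = Y j k" for j k
    using sum_first_join_right[OF Y V] by (simp add: sum_first_def fun_eq_iff)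
  have "?X i j k = 0" if "length q1 \<le> i \<or> length q2 \<le> j \<or> length q3 \<le> k" for i j k
    using that Smat_zero[OF V] by (auto simp: join_right_def spread_def set_nz_positions)
  moreover have "(\<Sum>j<length q2. \<Sum>k<length q3. ?X i j k) = q1 ! i" if "i < length q1" for i
    using sum_spread Smat_row_sum[OF V that] by (simp add: join_right_def length_cZ)
  moreover have "(\<Sum>i<length q1. \<Sum>k<length q3. ?X i j k) = q2 ! j" if "j < length q2" for j
  proof -
    have "(\<Sum>i<length q1. \<Sum>k<length q3. ?X i j k) = (\<Sum>k<length q3. \<Sum>i<length q1. ?X i j k)"
      by (rule sum.swap)
    then show ?thesis using Smat_row_sum[OF Y that] by (simp add: marg)
  qed
  moreover have "(\<Sum>i<length q1. \<Sum>j<length q2. ?X i j k) = q3 ! k" if "k < length q3" for k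
  proof -
    have "(\<Sum>i<length q1. \<Sum>j<length q2. ?X i j k) = (\<Sum>j<length q2. \<Sum>i<length q1. ?X i j k)"
      by (rule sum.swap)
    then show ?thesis using Smat_col_sum[OF Y that] by (simp add: marg)
  qed
  ultimately show ?thesis unfolding Smat3_def by blast
qed

lemma Smat3_zero_if_sum_first:
  assumes "X \<in> Smat3 q1 q2 q3" "sum_first q1 X j k = 0"
  shows "X i j k = 0"
  using assms Smat3_zero[OF assms(1), of i j k] by (cases "i < length q1") (auto simp: sum_first_def)

lemma sum_first_in_Smat:
  assumes X: "X \<in> Smat3 q1 q2 q3"
  shows "sum_first q1 X \<in> Smat q2 q3"
  using Smat3_zero[OF X] Smat3_sum2[OF X] Smat3_sum3[OF X]
  unfolding Smat_def sum_first_def by (auto simp: sum.swap[of _ "{..<length q1}"])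

lemma join_split_right:
  assumes X: "X \<in> Smat3 q1 q2 q3"
  shows "join_right q2 q3 (split_right q1 q2 q3 X) = X"
proof (intro ext)
  fix i j k
  have "spread (length q2) (length q3) (sum_first q1 X)
      (gather (length q2) (length q3) (sum_first q1 X) (\<lambda>j k. X i j k)) = (\<lambda>j k. X i j k)"
    by (rule spread_gather) (use Smat3_zero[OF X] Smat3_zero_if_sum_first[OF X] in auto)
  then show "join_right q2 q3 (split_right q1 q2 q3 X) i j k = X i j k"
    by (simp add: join_right_def split_right_def fun_eq_iff)
qed

lemma split_right_in_right_pairs:
  assumes X: "X \<in> Smat3 q1 q2 q3" and c: "cZ3 (length q1) (length q2) (length q3) X = c"
  shows "split_right q1 q2 q3 X \<in> right_pairs q1 q2 q3 c"
proof -
  let ?Y = "sum_first q1 X"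
  let ?V = "\<lambda>i l. gather (length q2) (length q3) ?Y (\<lambda>j k. X i j k) l"
  have vanish: "\<And>i j k. ?Y j k = 0 \<Longrightarrow> X i j k = 0" by (rule Smat3_zero_if_sum_first[OF X])
  have "?V i l = 0" if "length q1 \<le> i \<or> length (cZ (length q2) (length q3) ?Y) \<le> l" for i l
    using that Smat3_zero[OF X] by (auto simp: gather_def length_cZ split_beta)
  moreover have "(\<Sum>i<length q1. ?V i l) = cZ (length q2) (length q3) ?Y ! l"
    if "l < length (cZ (length q2) (length q3) ?Y)" for l
    using that nth_cZ[of l] by (simp add: gather_def length_cZ sum_first_def split_beta)
  moreover have "(\<Sum>l<length (cZ (length q2) (length q3) ?Y). ?V i l) = q1 ! i" if "i < length q1" for i
    using sum_gather[of "length q2" "length q3" ?Y "\<lambda>j k. X i j k"] vanish Smat3_sum1[OF X that]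
    by (simp add: length_cZ)
  ultimately have V: "?V \<in> Smat q1 (cZ (length q2) (length q3) ?Y)" unfolding Smat_def by blast
  have "join_right q2 q3 (?Y, ?V) = X"
    using join_split_right[OF X] by (simp add: split_right_def)
  then have "cZ (length q1) (length (cZ (length q2) (length q3) ?Y)) ?V = c"
    using cZ3_join_right[of q1 q2 q3 ?Y ?V] c by simp
  then show ?thesis using sum_first_in_Smat[OF X] V by (simp add: split_right_def right_pairs_def)
qed

lemma bij_betw_join_right:
  "bij_betw (join_right q2 q3) (right_pairs q1 q2 q3 c)
    {X \<in> Smat3 q1 q2 q3. cZ3 (length q1) (length q2) (length q3) X = c}"
proof (rule bij_betwI[where g = "split_right q1 q2 q3"])
  show "join_right q2 q3 \<in> right_pairs q1 q2 q3 c \<rightarrow> {X \<in> Smat3 q1 q2 q3. cZ3 (length q1) (length q2) (length q3) X = c}"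
    using join_right_in_Smat3 cZ3_join_right by (fastforce simp: right_pairs_def)
  show "split_right q1 q2 q3 \<in> {X \<in> Smat3 q1 q2 q3. cZ3 (length q1) (length q2) (length q3) X = c} \<rightarrow> right_pairs q1 q2 q3 c"
    using split_right_in_right_pairs by blast
  show "split_right q1 q2 q3 (join_right q2 q3 YV) = YV" if "YV \<in> right_pairs q1 q2 q3 c" for YV
  proof -
    obtain Y V where YV: "YV = (Y, V)" by (cases YV)
    with that have Y: "Y \<in> Smat q2 q3" and V: "V \<in> Smat q1 (cZ (length q2) (length q3) Y)"
      by (auto simp: right_pairs_def)
    have "gather (length q2) (length q3) Y (\<lambda>j k. join_right q2 q3 (Y, V) i j k) = V i" for i
      using Smat_zero[OF V] by (simp add: join_right_def gather_spread length_cZ)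
    then show ?thesis using YV by (simp add: split_right_def sum_first_join_right[OF Y V])
  qed
  show "join_right q2 q3 (split_right q1 q2 q3 X) = X"
    if "X \<in> {X \<in> Smat3 q1 q2 q3. cZ3 (length q1) (length q2) (length q3) X = c}" for X
    using that join_split_right by blast
qed

lemma card_dependent_pairs:
  assumes "finite A" "finite C" "f ` A \<subseteq> C" "\<forall>r\<in>C. finite (G r)"
  shows "card {(Z, W). Z \<in> A \<and> W \<in> G (f Z)} = (\<Sum>r\<in>C. card {Z \<in> A. f Z = r} * card (G r))"
proof -
  have "{(Z, W). Z \<in> A \<and> W \<in> G (f Z)} = (\<Union>r\<in>C. {Z \<in> A. f Z = r} \<times> G r)"
    using assms(3) by auto
  moreover have "card (\<Union>r\<in>C. {Z \<in> A. f Z = r} \<times> G r) = (\<Sum>r\<in>C. card ({Z \<in> A. f Z = r} \<times> G r))"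
    by (rule card_UN_disjoint) (use assms in auto)
  ultimately show ?thesis by (simp add: card_cartesian_product)
qed

lemma card_left_pairs:
  assumes "q1 \<in> compositions n"
  shows "int (card (left_pairs q1 q2 q3 c)) = (\<Sum>r\<in>compositions n. Bprod q1 q2 r * Bprod r q3 c)"
proof -
  have "left_pairs q1 q2 q3 c = {(Z, W). Z \<in> Smat q1 q2
      \<and> W \<in> (\<lambda>r. {W \<in> Smat r q3. cZ (length r) (length q3) W = c}) (cZ (length q1) (length q2) Z)}"
    unfolding left_pairs_def by auto
  moreover have "card {(Z, W). Z \<in> Smat q1 q2
      \<and> W \<in> (\<lambda>r. {W \<in> Smat r q3. cZ (length r) (length q3) W = c}) (cZ (length q1) (length q2) Z)}
    = (\<Sum>r\<in>compositions n. card {Z \<in> Smat q1 q2. cZ (length q1) (length q2) Z = r}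
      * card {W \<in> Smat r q3. cZ (length r) (length q3) W = c})"
    by (rule card_dependent_pairs) (use assms cZ_in_compositions finite_Smat finite_compositions in auto)
  ultimately show ?thesis unfolding Bprod_def by simp
qed

lemma card_right_pairs:
  assumes "q2 \<in> compositions n"
  shows "int (card (right_pairs q1 q2 q3 c)) = (\<Sum>r\<in>compositions n. Bprod q2 q3 r * Bprod q1 r c)"
proof -
  have "right_pairs q1 q2 q3 c = {(Y, V). Y \<in> Smat q2 q3
      \<and> V \<in> (\<lambda>r. {V \<in> Smat q1 r. cZ (length q1) (length r) V = c}) (cZ (length q2) (length q3) Y)}"
    unfolding right_pairs_def by auto
  moreover have "card {(Y, V). Y \<in> Smat q2 q3
      \<and> V \<in> (\<lambda>r. {V \<in> Smat q1 r. cZ (length q1) (length r) V = c}) (cZ (length q2) (length q3) Y)}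
    = (\<Sum>r\<in>compositions n. card {Y \<in> Smat q2 q3. cZ (length q2) (length q3) Y = r}
      * card {V \<in> Smat q1 r. cZ (length q1) (length r) V = c})"
    by (rule card_dependent_pairs) (use assms cZ_in_compositions finite_Smat finite_compositions in auto)
  ultimately show ?thesis unfolding Bprod_def by (simp add: mult.commute)
qed

lemma Bprod_assoc:
  assumes "q1 \<in> compositions n" "q2 \<in> compositions n"
  shows "(\<Sum>r\<in>compositions n. Bprod q1 q2 r * Bprod r q3 c)
    = (\<Sum>r\<in>compositions n. Bprod q2 q3 r * Bprod q1 r c)"
proof -
  have "card (left_pairs q1 q2 q3 c) = card (right_pairs q1 q2 q3 c)"
    using bij_betw_same_card[OF bij_betw_join_left[of q1 q2 q3 c]]
      bij_betw_same_card[OF bij_betw_join_right[of q2 q3 q1 c]]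
    by (rule trans[OF _ sym])
  then show ?thesis unfolding card_left_pairs[OF assms(1), symmetric] card_right_pairs[OF assms(2), symmetric]
    by simp
qed

definition zmult :: "nat \<Rightarrow> (nat list \<Rightarrow> int) \<Rightarrow> (nat list \<Rightarrow> int) \<Rightarrow> nat list \<Rightarrow> int" where
  "zmult n x y c = (\<Sum>q\<in>compositions n. \<Sum>r\<in>compositions n. x q * y r * Bprod q r c)"

lemma sum_rotate3: "(\<Sum>a\<in>A. \<Sum>b\<in>B. \<Sum>c\<in>C. f a b c) = (\<Sum>b\<in>B. \<Sum>c\<in>C. \<Sum>a\<in>A. f a b c)"
proof -
  have "(\<Sum>a\<in>A. \<Sum>b\<in>B. \<Sum>c\<in>C. f a b c) = (\<Sum>b\<in>B. \<Sum>a\<in>A. \<Sum>c\<in>C. f a b c)"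
    by (rule sum.swap)
  also have "\<dots> = (\<Sum>b\<in>B. \<Sum>c\<in>C. \<Sum>a\<in>A. f a b c)"
    by (rule sum.cong[OF refl]) (rule sum.swap)
  finally show ?thesis .
qed

lemma zmult_assoc: "zmult n x (zmult n y z) c = zmult n (zmult n x y) z c"
proof -
  let ?C = "compositions n"
  let ?T = "\<lambda>q q' r'. x q * y q' * z r'"
  let ?S = "\<lambda>q q' r'. \<Sum>r\<in>?C. Bprod q q' r * Bprod r r' c"
  have assoc_left: "x q * (y q' * z r' * Bprod q' r' r) * Bprod q r c = ?T q q' r' * (Bprod q' r' r * Bprod q r c)"
    for q q' r r' by (simp only: mult_ac)
  have assoc_right: "x q * y q' * Bprod q q' r * z r' * Bprod r r' c = ?T q q' r' * (Bprod q q' r * Bprod r r' c)"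
    for q q' r r' by (simp only: mult_ac)
  have "zmult n x (zmult n y z) c
      = (\<Sum>q\<in>?C. \<Sum>r\<in>?C. \<Sum>q'\<in>?C. \<Sum>r'\<in>?C. ?T q q' r' * (Bprod q' r' r * Bprod q r c))"
    by (simp only: zmult_def sum_distrib_left sum_distrib_right assoc_left)
  also have "\<dots> = (\<Sum>q\<in>?C. \<Sum>q'\<in>?C. \<Sum>r'\<in>?C. \<Sum>r\<in>?C. ?T q q' r' * (Bprod q' r' r * Bprod q r c))"
    by (rule sum.cong[OF refl]) (rule sum_rotate3)
  also have "\<dots> = (\<Sum>q\<in>?C. \<Sum>q'\<in>?C. \<Sum>r'\<in>?C. ?T q q' r' * ?S q q' r')"
    by (simp only: sum_distrib_left[symmetric] Bprod_assoc cong: sum.cong)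
  finally have left: "zmult n x (zmult n y z) c = (\<Sum>q\<in>?C. \<Sum>q'\<in>?C. \<Sum>r'\<in>?C. ?T q q' r' * ?S q q' r')" .
  have "zmult n (zmult n x y) z c
      = (\<Sum>r\<in>?C. \<Sum>r'\<in>?C. \<Sum>q\<in>?C. \<Sum>q'\<in>?C. ?T q q' r' * (Bprod q q' r * Bprod r r' c))"
    by (simp only: zmult_def sum_distrib_left sum_distrib_right assoc_right)
  also have "\<dots> = (\<Sum>r'\<in>?C. \<Sum>q\<in>?C. \<Sum>r\<in>?C. \<Sum>q'\<in>?C. ?T q q' r' * (Bprod q q' r * Bprod r r' c))"
    by (rule sum_rotate3)
  also have "\<dots> = (\<Sum>r'\<in>?C. \<Sum>q\<in>?C. \<Sum>q'\<in>?C. \<Sum>r\<in>?C. ?T q q' r' * (Bprod q q' r * Bprod r r' c))"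
    by (rule sum.cong[OF refl], rule sum.cong[OF refl], rule sum.swap)
  also have "\<dots> = (\<Sum>q\<in>?C. \<Sum>q'\<in>?C. \<Sum>r'\<in>?C. \<Sum>r\<in>?C. ?T q q' r' * (Bprod q q' r * Bprod r r' c))"
    by (rule sum_rotate3)
  also have "\<dots> = (\<Sum>q\<in>?C. \<Sum>q'\<in>?C. \<Sum>r'\<in>?C. ?T q q' r' * ?S q q' r')"
    by (simp only: sum_distrib_left)
  finally have right: "zmult n (zmult n x y) z c = (\<Sum>q\<in>?C. \<Sum>q'\<in>?C. \<Sum>r'\<in>?C. ?T q q' r' * ?S q q' r')" .
  show ?thesis by (rule trans[OF left right[symmetric]])
qed

lemma dmult_conv_zmult: "dmult n p x y c = zmult n x y c mod int p"
  by (simp add: dmult_def zmult_def)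

lemma sum_mod_cong:
  assumes "\<And>i. i \<in> A \<Longrightarrow> f i mod m = g i mod m"
  shows "sum f A mod m = sum g A mod (m :: int)"
proof -
  have "sum f A mod m = (\<Sum>i\<in>A. f i mod m) mod m" by (simp only: mod_sum_eq)
  also have "\<dots> = (\<Sum>i\<in>A. g i mod m) mod m" using assms by (simp cong: sum.cong)
  also have "\<dots> = sum g A mod m" by (simp only: mod_sum_eq)
  finally show ?thesis .
qed

lemma zmult_mod_cong:
  assumes "\<And>q. q \<in> compositions n \<Longrightarrow> x q mod int p = x' q mod int p"
    and "\<And>r. r \<in> compositions n \<Longrightarrow> y r mod int p = y' r mod int p"
  shows "zmult n x y c mod int p = zmult n x' y' c mod int p"
  unfolding zmult_def by (intro sum_mod_cong mod_mult_cong) (simp_all add: assms)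

lemma dmult_cong:
  assumes "\<And>q. q \<in> compositions n \<Longrightarrow> x q mod int p = x' q mod int p"
    and "\<And>r. r \<in> compositions n \<Longrightarrow> y r mod int p = y' r mod int p"
  shows "dmult n p x y = dmult n p x' y'"
  using zmult_mod_cong[OF assms] by (simp add: dmult_conv_zmult fun_eq_iff)

lemma dmult_assoc: "dmult n p x (dmult n p y z) = dmult n p (dmult n p x y) z"
proof (intro ext)
  fix c
  have "dmult n p x (dmult n p y z) c = zmult n x (zmult n y z) c mod int p"
    unfolding dmult_conv_zmult by (rule zmult_mod_cong) (simp_all add: dmult_conv_zmult)
  also have "\<dots> = zmult n (zmult n x y) z c mod int p" by (simp only: zmult_assoc)
  also have "\<dots> = dmult n p (dmult n p x y) z c"
    unfolding dmult_conv_zmult by (rule zmult_mod_cong) (simp_all add: dmult_conv_zmult)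
  finally show "dmult n p x (dmult n p y z) c = dmult n p (dmult n p x y) z c" .
qed

lemma dpow_Suc_right: "dpow n p x (Suc k) = dmult n p (dpow n p x k) x"
proof (induction k)
  case 0
  have "dmult n p x (\<lambda>c. x c mod int p) = dmult n p x x"
    and "dmult n p (\<lambda>c. x c mod int p) x = dmult n p x x"
    by (rule dmult_cong; simp)+
  then show ?case by simp
next
  case (Suc k)
  have "dpow n p x (Suc (Suc k)) = dmult n p x (dmult n p (dpow n p x k) x)"
    using Suc by simp
  also have "\<dots> = dmult n p (dpow n p x (Suc k)) x" by (simp add: dmult_assoc)
  finally show ?case .
qed

section \<open>Powers of \<open>B\<^sub>r\<close> when a part of \<open>r\<close> occurs \<open>p\<close> times\<close>

lemma funpow_mult_period: "(f ^^ p) x = x \<Longrightarrow> (f ^^ (p * m)) x = x"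
  by (induction m) (simp_all add: funpow_add)

definition funpow_orbit :: "('a \<Rightarrow> 'a) \<Rightarrow> 'a \<Rightarrow> 'a set" where
  "funpow_orbit f x = range (\<lambda>d. (f ^^ d) x)"

lemma funpow_orbit_trans:
  assumes "y \<in> funpow_orbit f x"
  shows "funpow_orbit f y \<subseteq> funpow_orbit f x"
proof
  fix z assume "z \<in> funpow_orbit f y"
  then obtain b where "z = (f ^^ b) y" by (auto simp: funpow_orbit_def)
  moreover obtain a where "y = (f ^^ a) x" using assms by (auto simp: funpow_orbit_def)
  ultimately have "z = (f ^^ (b + a)) x" by (simp add: funpow_add)
  then show "z \<in> funpow_orbit f x" by (simp add: funpow_orbit_def)
qed

lemma funpow_orbit_sym:
  assumes "(f ^^ p) x = x" "0 < p" "y \<in> funpow_orbit f x"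
  shows "x \<in> funpow_orbit f y"
proof -
  obtain a where a: "y = (f ^^ a) x" using assms(3) by (auto simp: funpow_orbit_def)
  have "p * a = (p * a - a) + a" using assms(2) by simp
  then have "(f ^^ (p * a - a)) y = (f ^^ (p * a)) x" by (metis a funpow_add comp_apply)
  also have "\<dots> = x" using assms(1) by (rule funpow_mult_period)
  finally show ?thesis unfolding funpow_orbit_def by (rule range_eqI[OF sym])
qed

lemma funpow_orbit_conv_image:
  assumes "(f ^^ p) x = x" "0 < p"
  shows "funpow_orbit f x = (\<lambda>d. (f ^^ d) x) ` {..<p}"
proof
  show "funpow_orbit f x \<subseteq> (\<lambda>d. (f ^^ d) x) ` {..<p}"
  proof
    fix y assume "y \<in> funpow_orbit f x"
    then obtain d where y: "y = (f ^^ d) x" by (auto simp: funpow_orbit_def)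
    have "d = d mod p + p * (d div p)" by simp
    then have "y = (f ^^ (d mod p)) ((f ^^ (p * (d div p))) x)" by (metis y funpow_add comp_apply)
    then have "y = (f ^^ (d mod p)) x" using funpow_mult_period[OF assms(1)] by simp
    moreover have "d mod p < p" using assms(2) by simp
    ultimately show "y \<in> (\<lambda>d. (f ^^ d) x) ` {..<p}" by blast
  qed
qed (auto simp: funpow_orbit_def)

lemma card_funpow_orbit:
  assumes "(f ^^ p) x = x" "0 < p"
    and free: "\<forall>y\<in>funpow_orbit f x. \<forall>d. 0 < d \<and> d < p \<longrightarrow> (f ^^ d) y \<noteq> y"
  shows "card (funpow_orbit f x) = p"
proof -
  have "inj_on (\<lambda>d. (f ^^ d) x) {..<p}"
  proof (rule linorder_inj_onI')
    fix i j assume "i \<in> {..<p}" "j \<in> {..<p}" "i < j"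
    then have "0 < j - i" "j - i < p" by auto
    moreover have "(f ^^ i) x \<in> funpow_orbit f x" by (simp add: funpow_orbit_def)
    ultimately have "(f ^^ (j - i)) ((f ^^ i) x) \<noteq> (f ^^ i) x" using free by blast
    moreover have "(f ^^ (j - i)) ((f ^^ i) x) = (f ^^ j) x"
      using \<open>i < j\<close> by (metis funpow_add comp_apply le_add_diff_inverse2 less_imp_le)
    ultimately show "(f ^^ i) x \<noteq> (f ^^ j) x" by simp
  qed
  then show ?thesis by (simp add: funpow_orbit_conv_image[OF assms(1,2)] card_image)
qed

lemma period_dvd_card:
  assumes "finite S" "0 < p" "f ` S \<subseteq> S" and period: "\<forall>x\<in>S. (f ^^ p) x = x"
    and free: "\<forall>x\<in>S. \<forall>d. 0 < d \<and> d < p \<longrightarrow> (f ^^ d) x \<noteq> x"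
  shows "p dvd card S"
proof -
  have orbit_sub: "funpow_orbit f x \<subseteq> S" if "x \<in> S" for x
  proof -
    have "(f ^^ d) x \<in> S" for d using that assms(3) by (induction d) auto
    then show ?thesis by (auto simp: funpow_orbit_def)
  qed
  have "x \<in> funpow_orbit f x" for x unfolding funpow_orbit_def by (rule range_eqI[where x = 0]) simp
  then have union: "\<Union> (funpow_orbit f ` S) = S" using orbit_sub by blast
  have "p dvd card (\<Union> (funpow_orbit f ` S))"
  proof (rule dvd_partition)
    show "finite (\<Union> (funpow_orbit f ` S))" using assms(1) union by simp
    show "\<forall>c\<in>funpow_orbit f ` S. p dvd card c"
    proof
      fix c assume "c \<in> funpow_orbit f ` S"
      then obtain x where x: "x \<in> S" "c = funpow_orbit f x" by blast
      have "card (funpow_orbit f x) = p"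
        using period x(1) assms(2) free orbit_sub[OF x(1)] by (intro card_funpow_orbit) auto
      then show "p dvd card c" using x(2) by simp
    qed
    have same: "funpow_orbit f x = funpow_orbit f z" if z: "z \<in> funpow_orbit f x" and x: "x \<in> S" for x z
    proof (rule equalityI)
      have "x \<in> funpow_orbit f z" using funpow_orbit_sym[OF period[rule_format, OF x] assms(2) z] .
      then show "funpow_orbit f x \<subseteq> funpow_orbit f z" by (rule funpow_orbit_trans)
      show "funpow_orbit f z \<subseteq> funpow_orbit f x" using z by (rule funpow_orbit_trans)
    qed
    show "\<forall>c1\<in>funpow_orbit f ` S. \<forall>c2\<in>funpow_orbit f ` S. c1 \<noteq> c2 \<longrightarrow> c1 \<inter> c2 = {}"
    proof (intro ballI impI)
      fix c1 c2 assume "c1 \<in> funpow_orbit f ` S" "c2 \<in> funpow_orbit f ` S" "c1 \<noteq> c2"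
      then obtain x y where "x \<in> S" "y \<in> S" "c1 = funpow_orbit f x" "c2 = funpow_orbit f y" by blast
      then show "c1 \<inter> c2 = {}" using same \<open>c1 \<noteq> c2\<close> by blast
    qed
  qed
  then show ?thesis by (simp only: union)
qed

lemma funpow_fixpoint: "f x = x \<Longrightarrow> (f ^^ n) x = x"
  by (induction n) auto

lemma cycle_of_list_funpow_length:
  assumes "distinct J"
  shows "(cycle_of_list J ^^ length J) j = j"
proof (cases "j \<in> set J")
  case True
  then obtain i where i: "i < length J" "j = J ! i" by (auto simp: in_set_conv_nth)
  have "map (cycle_of_list J ^^ length J) J = J"
    using cyclic_rotation[OF assms, of "length J"] by (simp add: rotate_id)
  then show ?thesis using i by (metis nth_map)
next
  case False
  then show ?thesis by (simp add: funpow_fixpoint id_outside_supp)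
qed

lemma cycle_of_list_funpow_nth:
  assumes "distinct J" "d < length J"
  shows "(cycle_of_list J ^^ d) (J ! 0) = J ! d"
proof -
  have "(cycle_of_list J ^^ d) (J ! 0) = map (cycle_of_list J ^^ d) J ! 0"
    using assms(2) by (subst nth_map) auto
  also have "\<dots> = rotate d J ! 0" by (simp only: cyclic_rotation[OF assms(1)])
  also have "\<dots> = J ! d"
    using nth_rotate[of 0 J d] assms(2) by (metis add_0_right gr_zeroI less_nat_zero_code mod_less)
  finally show ?thesis .
qed

definition permute_cols :: "(nat \<Rightarrow> nat) \<Rightarrow> (nat \<Rightarrow> nat \<Rightarrow> nat) \<Rightarrow> nat \<Rightarrow> nat \<Rightarrow> nat" where
  "permute_cols \<sigma> Z = (\<lambda>i j. Z i (\<sigma> j))"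

lemma funpow_permute_cols: "(permute_cols \<sigma> ^^ d) Z = permute_cols (\<sigma> ^^ d) Z"
  by (induction d) (simp_all add: permute_cols_def funpow_swap1)

lemma permute_cols_in_Smat:
  assumes Z: "Z \<in> Smat q r" and \<sigma>: "\<sigma> permutes {..<length r}" and val: "\<forall>j<length r. r ! \<sigma> j = r ! j"
  shows "permute_cols \<sigma> Z \<in> Smat q r"
proof -
  have "permute_cols \<sigma> Z i j = 0" if "length q \<le> i \<or> length r \<le> j" for i j
    using that Smat_zero[OF Z] permutes_not_in[OF \<sigma>, of j] by (auto simp: permute_cols_def)
  moreover have "(\<Sum>j<length r. permute_cols \<sigma> Z i j) = q ! i" if "i < length q" for i
    using sum.permute[OF \<sigma>, of "Z i"] Smat_row_sum[OF Z that] by (simp add: permute_cols_def comp_def)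
  moreover have "(\<Sum>i<length q. permute_cols \<sigma> Z i j) = r ! j" if "j < length r" for j
    using Smat_col_sum[OF Z, of "\<sigma> j"] permutes_in_image[OF \<sigma>, of j] val that
    by (simp add: permute_cols_def)
  ultimately show ?thesis unfolding Smat_def by blast
qed

lemma card_nonzero_row_permute_cols:
  assumes \<sigma>: "\<sigma> permutes {..<t}"
  shows "card {j. j < t \<and> permute_cols \<sigma> Z i j \<noteq> 0} = card {j. j < t \<and> Z i j \<noteq> 0}"
proof -
  have "\<sigma> ` {j. j < t \<and> Z i (\<sigma> j) \<noteq> 0} = {j. j < t \<and> Z i j \<noteq> 0}"
  proof
    show "\<sigma> ` {j. j < t \<and> Z i (\<sigma> j) \<noteq> 0} \<subseteq> {j. j < t \<and> Z i j \<noteq> 0}"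
      using permutes_in_image[OF \<sigma>] by auto
    show "{j. j < t \<and> Z i j \<noteq> 0} \<subseteq> \<sigma> ` {j. j < t \<and> Z i (\<sigma> j) \<noteq> 0}"
    proof
      fix j assume "j \<in> {j. j < t \<and> Z i j \<noteq> 0}"
      then show "j \<in> \<sigma> ` {j. j < t \<and> Z i (\<sigma> j) \<noteq> 0}"
        using permutes_inverses(1)[OF \<sigma>, of j] permutes_in_image[OF permutes_inv[OF \<sigma>], of j]
        by (auto intro: image_eqI[where x = "inv \<sigma> j"])
    qed
  qed
  moreover have "card (\<sigma> ` {j. j < t \<and> Z i (\<sigma> j) \<noteq> 0}) = card {j. j < t \<and> Z i (\<sigma> j) \<noteq> 0}"
    using permutes_inj_on[OF \<sigma>] by (rule card_image)
  ultimately show ?thesis by (simp add: permute_cols_def)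
qed

lemma count_list_conv_indices: "count_list r v = length (filter (\<lambda>i. r ! i = v) [0..<length r])"
proof -
  have "count_list r v = length (filter ((=) v) (map ((!) r) [0..<length r]))"
    by (simp only: count_list_eq_length_filter map_nth)
  also have "\<dots> = length (filter (\<lambda>i. r ! i = v) [0..<length r])"
    unfolding filter_map length_map comp_def by (metis (mono_tags, lifting))
  finally show ?thesis .
qed

lemma obtain_indices_of_value:
  assumes "p \<le> count_list r a"
  obtains J where "distinct J" "length J = p" "set J \<subseteq> {..<length r}" "\<forall>j\<in>set J. r ! j = a"
proof
  let ?F = "filter (\<lambda>j. r ! j = a) [0..<length r]"
  show "length (take p ?F) = p" using assms by (simp add: count_list_conv_indices)
  show "distinct (take p ?F)" by simp
  show "set (take p ?F) \<subseteq> {..<length r}" "\<forall>j\<in>set (take p ?F). r ! j = a"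
    using set_take_subset[of p ?F] by auto
qed

lemma nth_cycle_of_list:
  assumes "\<forall>j\<in>set J. r ! j = a"
  shows "r ! cycle_of_list J j = r ! j"
proof (cases "j \<in> set J")
  case True
  then have "cycle_of_list J j \<in> set J" using permutes_in_image[OF cycle_permutes[of J]] by simp
  then show ?thesis using assms True by simp
next
  case False
  then show ?thesis by (simp add: id_outside_supp)
qed

lemma permute_cols_cycle_ne:
  assumes Z: "Z \<in> Smat q r" and single: "\<forall>i<length q. card {j. j < length r \<and> Z i j \<noteq> 0} = 1"
    and r: "\<forall>x\<in>set r. 0 < x" and J: "distinct J" "set J \<subseteq> {..<length r}"
    and d: "0 < d" "d < length J"
  shows "permute_cols (cycle_of_list J ^^ d) Z \<noteq> Z"
proof
  assume fixed: "permute_cols (cycle_of_list J ^^ d) Z = Z"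
  have "J ! 0 \<in> set J" "J ! d \<in> set J" using d by (auto intro: nth_mem)
  then have j0: "J ! 0 < length r" and jd: "J ! d < length r" using J(2) by auto
  have ne: "J ! 0 \<noteq> J ! d" using nth_eq_iff_index_eq[OF J(1), of 0 d] d by (cases J) auto
  have "0 < r ! (J ! 0)" using r j0 by simp
  then obtain i where i: "i < length q" "Z i (J ! 0) \<noteq> 0" using Smat_col_nonzero[OF Z j0] by blast
  have "Z i (J ! d) = Z i (J ! 0)"
    using fun_cong[OF fun_cong[OF fixed, of i], of "J ! 0"] cycle_of_list_funpow_nth[OF J(1) d(2)]
    by (simp add: permute_cols_def)
  then have "{J ! 0, J ! d} \<subseteq> {j. j < length r \<and> Z i j \<noteq> 0}" using i j0 jd by auto
  then have "card {J ! 0, J ! d} \<le> card {j. j < length r \<and> Z i j \<noteq> 0}"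
    by (rule card_mono[rotated]) simp
  then show False using single i(1) ne by simp
qed

lemma dvd_Bprod_self_if_repeated_part:
  assumes q: "\<forall>x\<in>set q. 0 < x" and r: "\<forall>x\<in>set r. 0 < x" and p: "0 < p"
    and cnt: "p \<le> count_list r a"
  shows "int p dvd Bprod q r q"
proof -
  obtain J where J: "distinct J" "length J = p" "set J \<subseteq> {..<length r}" "\<forall>j\<in>set J. r ! j = a"
    by (rule obtain_indices_of_value[OF cnt])
  let ?\<sigma> = "cycle_of_list J"
  let ?S = "{Z \<in> Smat q r. cZ (length q) (length r) Z = q}"
  have \<sigma>: "?\<sigma> permutes {..<length r}" using cycle_permutes J(3) by (rule permutes_subset)
  have single: "\<forall>i<length q. card {j. j < length r \<and> Z i j \<noteq> 0} = 1" if "Z \<in> ?S" for Z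
    using that cZ_eq_iff_single_entry_rows[OF _ q] by blast
  have "permute_cols ?\<sigma> ` ?S \<subseteq> ?S"
  proof (rule image_subsetI)
    fix Z assume Z: "Z \<in> ?S"
    then have "permute_cols ?\<sigma> Z \<in> Smat q r"
      using permute_cols_in_Smat[OF _ \<sigma>] nth_cycle_of_list[OF J(4)] by blast
    moreover have "\<forall>i<length q. card {j. j < length r \<and> permute_cols ?\<sigma> Z i j \<noteq> 0} = 1"
      using single[OF Z] card_nonzero_row_permute_cols[OF \<sigma>] by simp
    ultimately show "permute_cols ?\<sigma> Z \<in> ?S" using cZ_eq_if_single_entry_rows by blast
  qed
  moreover have "\<forall>Z\<in>?S. (permute_cols ?\<sigma> ^^ p) Z = Z"
    using cycle_of_list_funpow_length[OF J(1)] J(2) by (simp add: funpow_permute_cols permute_cols_def)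
  moreover have "\<forall>Z\<in>?S. \<forall>d. 0 < d \<and> d < p \<longrightarrow> (permute_cols ?\<sigma> ^^ d) Z \<noteq> Z"
  proof (intro ballI allI impI)
    fix Z d assume "Z \<in> ?S" "0 < d \<and> d < p"
    then show "(permute_cols ?\<sigma> ^^ d) Z \<noteq> Z"
      using permute_cols_cycle_ne[OF _ single r J(1,3)] J(2) by (simp add: funpow_permute_cols)
  qed
  ultimately have "p dvd card ?S" using finite_Smat[of q r] p by (intro period_dvd_card) simp_all
  then show ?thesis by (simp add: Bprod_def)
qed

lemma dmult_basisB_right:
  assumes "r \<in> compositions n" "1 < p"
  shows "dmult n p y (basisB p r) c = (\<Sum>q\<in>compositions n. y q * Bprod q r c) mod int p"
proof -
  have "y q * basisB p r r' * Bprod q r' c = (if r' = r then y q * Bprod q r c else 0)" for q r'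
    using assms(2) by (simp add: basisB_def)
  then have "(\<Sum>r'\<in>compositions n. y q * basisB p r r' * Bprod q r' c) = y q * Bprod q r c" for q
    using assms(1) finite_compositions by simp
  then show ?thesis by (simp add: dmult_def)
qed

lemma dmult_basisB_right_eq_0:
  assumes r: "r \<in> compositions n" and p: "prime p" and cnt: "p \<le> count_list r a"
    and y: "\<And>q. q \<in> compositions n \<Longrightarrow> length q < l \<Longrightarrow> y q = 0"
    and c: "length c \<le> l"
  shows "dmult n p y (basisB p r) c = 0"
proof -
  have "int p dvd y q * Bprod q r c" if q: "q \<in> compositions n" for q
  proof (cases "length q < l")
    case True
    then show ?thesis using y q by simp
  next
    case False
    then consider "length c < length q" | "length c = length q" "c \<noteq> q" | "c = q"
      using c by linarith
    then show ?thesis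
    proof cases
      case 1
      then show ?thesis using Bprod_eq_0_if_shorter_than_left[OF q] by simp
    next
      case 2
      then show ?thesis using Bprod_eq_0_if_length_eq_left[OF q] by simp
    next
      case 3
      then show ?thesis
        using dvd_Bprod_self_if_repeated_part[OF compositions_positive[OF q] compositions_positive[OF r]
            prime_gt_0_nat[OF p] cnt]
        by simp
    qed
  qed
  then have "int p dvd (\<Sum>q\<in>compositions n. y q * Bprod q r c)" by (rule dvd_sum)
  then show ?thesis using dmult_basisB_right[OF r prime_gt_1_nat[OF p]] by simp
qed

lemma dpow_repeated_basisB_eq_0:
  assumes "r \<in> compositions n" "prime p" "p \<le> count_list r a"
  shows "c \<in> compositions n \<Longrightarrow> length c < length r + k \<Longrightarrow> dpow n p (basisB p r) k c = 0"
proof (induction k arbitrary: c)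
  case 0
  then show ?case by (auto simp: basisB_def)
next
  case (Suc k)
  then show ?case
    unfolding dpow_Suc_right by (intro dmult_basisB_right_eq_0[OF assms, where l = "length r + k"]) auto
qed

lemma nilpotent_if_repeated_part:
  assumes r: "r \<in> compositions n" and p: "prime p" and cnt: "p \<le> count_list r a"
  shows "nilpotent_desc n p (basisB p r)"
proof -
  have "dpow n p (basisB p r) (Suc n) c = 0" for c
  proof (cases "c \<in> compositions n")
    case True
    then have "length c < length r + Suc n" using length_le_if_compositions[OF True] by simp
    then show ?thesis using dpow_repeated_basisB_eq_0[OF assms True] by blast
  next
    case False
    have "dpow n p (basisB p r) (Suc n) c
        = (\<Sum>q\<in>compositions n. dpow n p (basisB p r) n q * Bprod q r c) mod int p"
      by (simp only: dpow_Suc_right dmult_basisB_right[OF r prime_gt_1_nat[OF p]])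
    also have "\<dots> = 0" using Bprod_eq_0_if_not_composition[OF _ False] by simp
    finally show ?thesis .
  qed
  then show ?thesis unfolding nilpotent_desc_def by blast
qed

section \<open>Powers of \<open>B\<^sub>r\<close> when every part of \<open>r\<close> occurs fewer than \<open>p\<close> times\<close>

lemma permutes_restrict_invariant:
  assumes \<sigma>: "\<sigma> permutes S" and F: "finite F" "\<sigma> ` F \<subseteq> F"
  shows "(\<lambda>i. if i \<in> F then \<sigma> i else i) permutes F"
proof (rule bij_imp_permutes)
  have "inj_on \<sigma> F" using permutes_inj_on[OF \<sigma>] .
  moreover have "\<sigma> ` F = F" using F calculation by (intro endo_inj_surj)
  ultimately show "bij_betw (\<lambda>i. if i \<in> F then \<sigma> i else i) F F" by (auto simp: bij_betw_def inj_on_def)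
qed simp

lemma permutes_glue_fibres:
  assumes S: "finite S" and \<tau>: "\<And>v. v \<in> g ` S \<Longrightarrow> \<tau> v permutes {i\<in>S. g i = v}"
  shows "(\<lambda>i. if i \<in> S then \<tau> (g i) i else i) permutes S"
    and "\<forall>i\<in>S. g (\<tau> (g i) i) = g i"
proof -
  let ?glue = "\<lambda>i. if i \<in> S then \<tau> (g i) i else i"
  have in_fibre: "?glue i \<in> {i'\<in>S. g i' = g i}" if "i \<in> S" for i
    using that permutes_in_image[OF \<tau>, of "g i" i] by simp
  have "inj_on ?glue S"
  proof (rule inj_onI)
    fix i j assume i: "i \<in> S" and j: "j \<in> S" and eq: "?glue i = ?glue j"
    then have "g i = g j" using in_fibre[OF i] in_fibre[OF j] by simp
    then show "i = j" using eq i j permutes_inj[OF \<tau>, of "g i"] by (simp add: inj_eq)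
  qed
  moreover have "?glue ` S = S"
    using S in_fibre calculation by (intro endo_inj_surj) auto
  ultimately have "bij_betw ?glue S S" unfolding bij_betw_def ..
  then show "?glue permutes S" by (rule bij_imp_permutes) simp
  show "\<forall>i\<in>S. g (\<tau> (g i) i) = g i" using in_fibre by simp
qed

lemma card_fibrewise_permutations:
  assumes S: "finite S"
  shows "card {\<sigma>. \<sigma> permutes S \<and> (\<forall>i\<in>S. g (\<sigma> i) = g i)} = (\<Prod>v\<in>g ` S. fact (card {i\<in>S. g i = v}))"
proof -
  define F where "F v = {i\<in>S. g i = v}" for v
  let ?P = "{\<sigma>. \<sigma> permutes S \<and> (\<forall>i\<in>S. g (\<sigma> i) = g i)}"
  let ?T = "PiE (g ` S) (\<lambda>v. {\<tau>. \<tau> permutes F v})"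
  define restr where "restr \<sigma> = (\<lambda>v\<in>g ` S. \<lambda>i. if i \<in> F v then \<sigma> i else i)" for \<sigma> :: "'a \<Rightarrow> 'a"
  define glue where "glue \<tau> = (\<lambda>i. if i \<in> S then \<tau> (g i) i else i)" for \<tau>
  have finF: "finite (F v)" for v using S by (simp add: F_def)
  have "bij_betw restr ?P ?T"
  proof (rule bij_betwI[where g = glue])
    show "restr \<in> ?P \<rightarrow> ?T"
    proof
      fix \<sigma> assume "\<sigma> \<in> ?P"
      then have \<sigma>: "\<sigma> permutes S" and inv: "\<sigma> ` F v \<subseteq> F v" for v
        using permutes_in_image[of \<sigma> S] by (auto simp: F_def)
      have "(\<lambda>i. if i \<in> F v then \<sigma> i else i) permutes F v" for v
        by (rule permutes_restrict_invariant[OF \<sigma> finF inv])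
      then show "restr \<sigma> \<in> ?T" unfolding restr_def restrict_PiE_iff by simp
    qed
    show "glue \<in> ?T \<rightarrow> ?P"
    proof
      fix \<tau> assume "\<tau> \<in> ?T"
      then have "\<tau> v permutes {i\<in>S. g i = v}" if "v \<in> g ` S" for v using that by (auto simp: PiE_iff F_def)
      then show "glue \<tau> \<in> ?P" using permutes_glue_fibres[OF S, of g \<tau>] by (simp add: glue_def)
    qed
    show "glue (restr \<sigma>) = \<sigma>" if "\<sigma> \<in> ?P" for \<sigma>
      using that permutes_not_in[of \<sigma> S] by (auto simp: glue_def restr_def F_def fun_eq_iff)
    show "restr (glue \<tau>) = \<tau>" if "\<tau> \<in> ?T" for \<tau>
    proof
      fix v
      show "restr (glue \<tau>) v = \<tau> v"
      proof (cases "v \<in> g ` S")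
        case True
        then have "\<tau> v permutes F v" using that by (auto simp: PiE_iff)
        then show ?thesis
          using True permutes_not_in[of "\<tau> v" "F v"] by (auto simp: glue_def restr_def F_def fun_eq_iff)
      qed (use that in \<open>auto simp: restr_def PiE_iff extensional_def\<close>)
    qed
  qed
  then have "card ?P = card ?T" by (rule bij_betw_same_card)
  also have "\<dots> = (\<Prod>v\<in>g ` S. fact (card (F v)))" using S finF by (simp add: card_PiE card_permutations)
  finally show ?thesis by (simp add: F_def)
qed

definition stabiliser :: "nat list \<Rightarrow> (nat \<Rightarrow> nat) set" where
  "stabiliser r = {\<sigma>. \<sigma> permutes {..<length r} \<and> (\<forall>i\<in>{..<length r}. r ! \<sigma> i = r ! i)}"

definition permutation_matrix :: "nat list \<Rightarrow> (nat \<Rightarrow> nat) \<Rightarrow> nat \<Rightarrow> nat \<Rightarrow> nat" where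
  "permutation_matrix r \<sigma> = (\<lambda>i j. if i < length r \<and> j = \<sigma> i then r ! i else 0)"

lemma card_stabiliser: "card (stabiliser r) = (\<Prod>v\<in>set r. fact (count_list r v))"
proof -
  have count: "card {i. i < length r \<and> r ! i = v} = count_list r v" for v
  proof -
    have "{i. i < length r \<and> r ! i = v} = {i. r ! i = v} \<inter> set [0..<length r]" by auto
    then show ?thesis by (simp add: count_list_conv_indices distinct_length_filter)
  qed
  have "card (stabiliser r) = (\<Prod>v\<in>(!) r ` {..<length r}. fact (card {i\<in>{..<length r}. r ! i = v}))"
    unfolding stabiliser_def by (rule card_fibrewise_permutations) simp
  also have "(!) r ` {..<length r} = set r" by (auto simp: in_set_conv_nth)
  finally show ?thesis by (simp add: count)
qed

lemma permutation_matrix_in_Smat: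
  assumes r: "\<forall>x\<in>set r. 0 < x" and \<sigma>: "\<sigma> \<in> stabiliser r"
  shows "permutation_matrix r \<sigma> \<in> {Z \<in> Smat r r. cZ (length r) (length r) Z = r}"
proof -
  let ?Z = "permutation_matrix r \<sigma>"
  have perm: "\<sigma> permutes {..<length r}" and val: "\<forall>i<length r. r ! \<sigma> i = r ! i"
    using \<sigma> by (auto simp: stabiliser_def)
  have lt: "\<sigma> i < length r" if "i < length r" for i using permutes_in_image[OF perm] that by simp
  have "?Z i j = 0" if "length r \<le> i \<or> length r \<le> j" for i j
  proof (cases "i < length r")
    case True
    then have "j \<noteq> \<sigma> i" using that lt[OF True] by auto
    then show ?thesis by (simp add: permutation_matrix_def)
  qed (simp add: permutation_matrix_def)
  moreover have "(\<Sum>j<length r. ?Z i j) = r ! i" if "i < length r" for i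
    using that lt[OF that] by (simp add: permutation_matrix_def)
  moreover have "(\<Sum>i<length r. ?Z i j) = r ! j" if j: "j < length r" for j
  proof -
    have "(\<Sum>i<length r. ?Z i j) = (\<Sum>i<length r. if j = \<sigma> i then r ! \<sigma> i else 0)"
      using val by (intro sum.cong) (auto simp: permutation_matrix_def)
    also have "\<dots> = (\<Sum>k<length r. if j = k then r ! k else 0)"
      using sum.permute[OF perm, of "\<lambda>k. if j = k then r ! k else 0"] by (simp add: comp_def)
    finally show ?thesis using j by simp
  qed
  ultimately have Z: "?Z \<in> Smat r r" unfolding Smat_def by blast
  have "{j. j < length r \<and> ?Z i j \<noteq> 0} = {\<sigma> i}" if "i < length r" for i
    using that lt r by (auto simp: permutation_matrix_def)
  then have "cZ (length r) (length r) ?Z = r" by (intro cZ_eq_if_single_entry_rows[OF Z]) simp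
  then show ?thesis using Z by simp
qed

lemma inj_on_permutation_matrix:
  assumes r: "\<forall>x\<in>set r. 0 < x"
  shows "inj_on (permutation_matrix r) (stabiliser r)"
proof (rule inj_onI, rule ext)
  fix \<sigma> \<tau> i assume \<sigma>: "\<sigma> \<in> stabiliser r" and \<tau>: "\<tau> \<in> stabiliser r"
    and eq: "permutation_matrix r \<sigma> = permutation_matrix r \<tau>"
  show "\<sigma> i = \<tau> i"
  proof (cases "i < length r")
    case True
    then have "permutation_matrix r \<sigma> i (\<sigma> i) \<noteq> 0" using r by (simp add: permutation_matrix_def)
    then show ?thesis
      using fun_cong[OF fun_cong[OF eq, of i], of "\<sigma> i"] by (simp add: permutation_matrix_def split: if_splits)
  next
    case False
    then show ?thesis
      using \<sigma> \<tau> permutes_not_in[of \<sigma> "{..<length r}" i] permutes_not_in[of \<tau> "{..<length r}" i]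
      by (simp add: stabiliser_def)
  qed
qed

lemma single_entry_rows_permutation:
  assumes r: "\<forall>x\<in>set r. 0 < x" and Z: "Z \<in> Smat r r"
    and single: "\<forall>i<length r. card {j. j < length r \<and> Z i j \<noteq> 0} = 1"
  obtains \<sigma> where "\<sigma> permutes {..<length r}" "\<And>i j. i < length r \<Longrightarrow> Z i j \<noteq> 0 \<longleftrightarrow> j = \<sigma> i"
proof -
  let ?t = "length r"
  have "\<forall>i<?t. \<exists>j. {j'. j' < ?t \<and> Z i j' \<noteq> 0} = {j}" using single by (simp add: card_1_singleton_iff)
  then obtain col where col: "\<And>i. i < ?t \<Longrightarrow> {j. j < ?t \<and> Z i j \<noteq> 0} = {col i}" by metis
  define \<sigma> where "\<sigma> i = (if i < ?t then col i else i)" for i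
  have nz_iff: "Z i j \<noteq> 0 \<longleftrightarrow> j = \<sigma> i" if i: "i < ?t" for i j
  proof (cases "j < ?t")
    case True
    then show ?thesis using col[OF i] i by (auto simp: \<sigma>_def)
  next
    case False
    then have "j \<noteq> \<sigma> i" using col[OF i] i by (auto simp: \<sigma>_def)
    then show ?thesis using False Smat_zero[OF Z, of i j] by simp
  qed
  have img: "\<sigma> ` {..<?t} = {..<?t}"
  proof
    show "\<sigma> ` {..<?t} \<subseteq> {..<?t}" using col by (auto simp: \<sigma>_def)
    show "{..<?t} \<subseteq> \<sigma> ` {..<?t}"
    proof
      fix j assume "j \<in> {..<?t}"
      then have j: "j < ?t" by simp
      have "0 < r ! j" using r j by simp
      then obtain i where "i < ?t" "Z i j \<noteq> 0" using Smat_col_nonzero[OF Z j] by blast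
      then show "j \<in> \<sigma> ` {..<?t}" using nz_iff by blast
    qed
  qed
  then have "inj_on \<sigma> {..<?t}" by (intro eq_card_imp_inj_on) simp_all
  then have "\<sigma> permutes {..<?t}" using img by (intro bij_imp_permutes) (auto simp: bij_betw_def \<sigma>_def)
  then show ?thesis using nz_iff that by blast
qed

lemma permutation_matrix_if_single_entry_rows:
  assumes r: "\<forall>x\<in>set r. 0 < x" and Z: "Z \<in> Smat r r"
    and single: "\<forall>i<length r. card {j. j < length r \<and> Z i j \<noteq> 0} = 1"
  shows "Z \<in> permutation_matrix r ` stabiliser r"
proof -
  let ?t = "length r"
  obtain \<sigma> where perm: "\<sigma> permutes {..<?t}" and nz_iff: "\<And>i j. i < ?t \<Longrightarrow> Z i j \<noteq> 0 \<longleftrightarrow> j = \<sigma> i"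
    using single_entry_rows_permutation[OF r Z single] by blast
  have lt: "\<sigma> i < ?t" if "i < ?t" for i using permutes_in_image[OF perm] that by simp
  have diag: "Z i (\<sigma> i) = r ! i" if i: "i < ?t" for i
  proof -
    have "(\<Sum>j<?t. Z i j) = (\<Sum>j\<in>{\<sigma> i}. Z i j)"
      using nz_iff[OF i] lt[OF i] by (intro sum.mono_neutral_right) auto
    then show ?thesis using Smat_row_sum[OF Z i] by simp
  qed
  have "r ! \<sigma> i = r ! i" if i: "i < ?t" for i
  proof -
    have "Z i' (\<sigma> i) = 0" if i': "i' \<in> {..<?t} - {i}" for i'
    proof -
      have "\<sigma> i \<noteq> \<sigma> i'" using i' permutes_inj[OF perm] by (auto dest: injD)
      then show ?thesis using nz_iff[of i' "\<sigma> i"] i' by auto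
    qed
    then have "(\<Sum>i'<?t. Z i' (\<sigma> i)) = (\<Sum>i'\<in>{i}. Z i' (\<sigma> i))"
      using i by (intro sum.mono_neutral_right) auto
    then show ?thesis using Smat_col_sum[OF Z lt[OF i]] diag[OF i] by simp
  qed
  then have "\<sigma> \<in> stabiliser r" using perm by (simp add: stabiliser_def)
  moreover have "Z = permutation_matrix r \<sigma>"
  proof (intro ext)
    fix i j
    show "Z i j = permutation_matrix r \<sigma> i j"
      using diag nz_iff[of i j] Smat_zero[OF Z, of i j] by (cases "i < ?t") (auto simp: permutation_matrix_def)
  qed
  ultimately show ?thesis by blast
qed

lemma Bprod_self_eq_card_stabiliser:
  assumes r: "\<forall>x\<in>set r. 0 < x"
  shows "Bprod r r r = int (card (stabiliser r))"
proof -
  have "{Z \<in> Smat r r. cZ (length r) (length r) Z = r} = permutation_matrix r ` stabiliser r"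
    using permutation_matrix_in_Smat[OF r] permutation_matrix_if_single_entry_rows[OF r]
      cZ_eq_iff_single_entry_rows[OF _ r] by blast
  then show ?thesis using card_image[OF inj_on_permutation_matrix[OF r]] by (simp add: Bprod_def)
qed

lemma not_dvd_card_stabiliser:
  assumes p: "prime p" and cnt: "\<forall>a. count_list r a < p"
  shows "\<not> p dvd card (stabiliser r)"
proof
  assume "p dvd card (stabiliser r)"
  then obtain v where "p dvd fact (count_list r v)"
    by (auto simp: card_stabiliser prime_dvd_prod_iff[OF finite_set p])
  then show False using prime_dvd_fact_iff[OF p] cnt leD by blast
qed

lemma dmult_basisB_left:
  assumes "r \<in> compositions n" "1 < p"
  shows "dmult n p (basisB p r) y c = (\<Sum>q\<in>compositions n. y q * Bprod r q c) mod int p"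
proof -
  have "(\<Sum>q\<in>compositions n. basisB p r r' * y q * Bprod r' q c)
      = (if r' = r then \<Sum>q\<in>compositions n. y q * Bprod r q c else 0)" for r'
    using assms(2) by (simp add: basisB_def)
  then have "(\<Sum>r'\<in>compositions n. \<Sum>q\<in>compositions n. basisB p r r' * y q * Bprod r' q c)
      = (\<Sum>q\<in>compositions n. y q * Bprod r q c)"
    using assms(1) finite_compositions by simp
  then show ?thesis by (simp add: dmult_def)
qed

lemma dpow_basisB_eq_0_if_shorter:
  assumes r: "r \<in> compositions n" and p: "1 < p"
    and c: "length c < length r \<or> length c = length r \<and> c \<noteq> r"
  shows "dpow n p (basisB p r) k c = 0"
proof (cases k)
  case 0
  then show ?thesis using c by (auto simp: basisB_def)
next
  case (Suc m)
  have "Bprod r q c = 0" if "q \<in> compositions n" for q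
    using c Bprod_eq_0_if_shorter_than_left[OF r] Bprod_eq_0_if_length_eq_left[OF r] by blast
  then show ?thesis using Suc dmult_basisB_left[OF r p] by simp
qed

lemma dpow_basisB_self:
  assumes r: "r \<in> compositions n" and p: "1 < p"
  shows "dpow n p (basisB p r) k r = Bprod r r r ^ k mod int p"
proof (induction k)
  case 0
  then show ?case using p by (simp add: basisB_def)
next
  case (Suc k)
  let ?y = "dpow n p (basisB p r) k"
  have summand: "?y q * Bprod r q r = (if q = r then ?y r * Bprod r r r else 0)" if q: "q \<in> compositions n" for q
  proof (cases "length r < length q")
    case True
    then show ?thesis using Bprod_eq_0_if_shorter_than_right[OF q] by auto
  next
    case False
    show ?thesis
    proof (cases "q = r")
      case False
      then have "?y q = 0"
        using \<open>\<not> length r < length q\<close> by (intro dpow_basisB_eq_0_if_shorter[OF r p]) linarith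
      then show ?thesis using False by simp
    qed simp
  qed
  have "(\<Sum>q\<in>compositions n. ?y q * Bprod r q r)
      = (\<Sum>q\<in>compositions n. if q = r then ?y r * Bprod r r r else 0)"
    by (rule sum.cong[OF refl]) (rule summand)
  also have "\<dots> = ?y r * Bprod r r r" using r finite_compositions by simp
  finally have "dpow n p (basisB p r) (Suc k) r = ?y r * Bprod r r r mod int p"
    by (simp add: dmult_basisB_left[OF r p])
  also have "\<dots> = Bprod r r r ^ Suc k mod int p"
    using Suc by (simp add: mod_mult_right_eq mult.commute)
  finally show ?case .
qed

lemma not_nilpotent_if_no_repeated_part:
  assumes r: "r \<in> compositions n" and p: "prime p" and cnt: "\<forall>a. count_list r a < p"
  shows "\<not> nilpotent_desc n p (basisB p r)"
proof
  assume "nilpotent_desc n p (basisB p r)"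
  then obtain k where "dpow n p (basisB p r) k = (\<lambda>_. 0)" unfolding nilpotent_desc_def ..
  then have "Bprod r r r ^ k mod int p = 0"
    using dpow_basisB_self[OF r prime_gt_1_nat[OF p], of k] by simp
  then have "int p dvd int (card (stabiliser r)) ^ k"
    by (simp add: Bprod_self_eq_card_stabiliser[OF compositions_positive[OF r]] mod_eq_0_iff_dvd)
  then have "p dvd card (stabiliser r) ^ k" by (metis of_nat_dvd_iff of_nat_power)
  then have "p dvd card (stabiliser r)" using prime_dvd_power[OF p] by blast
  then show False using not_dvd_card_stabiliser[OF p cnt] by contradiction
qed

theorem lemma2p4:
  fixes n p :: nat and r :: "nat list"
  assumes "1 \<le> n" and "prime p" and "r \<in> compositions n"
  shows "nilpotent_desc n p (basisB p r) \<longleftrightarrow> (\<exists>a::nat. 0 < a \<and> p \<le> count_list r a)"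
proof
  assume nilpotent: "nilpotent_desc n p (basisB p r)"
  show "\<exists>a::nat. 0 < a \<and> p \<le> count_list r a"
  proof (rule ccontr)
    assume none: "\<not> (\<exists>a::nat. 0 < a \<and> p \<le> count_list r a)"
    have "count_list r a < p" for a
    proof (cases "a = 0")
      case True
      then have "count_list r a = 0" using compositions_positive[OF assms(3)] by (auto simp: count_list_0_iff)
      then show ?thesis using prime_gt_0_nat[OF assms(2)] by simp
    next
      case False
      then have "\<not> p \<le> count_list r a" using none by blast
      then show ?thesis by simp
    qed
    then show False using not_nilpotent_if_no_repeated_part[OF assms(3,2)] nilpotent by blast
  qed
next
  assume "\<exists>a::nat. 0 < a \<and> p \<le> count_list r a"
  then obtain a where "p \<le> count_list r a" by blast
  then show "nilpotent_desc n p (basisB p r)" by (rule nilpotent_if_repeated_part[OF assms(3,2)])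
qed

end
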